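(* Let $\{\mathcal G,(\Gamma_0,\Gamma_1),(\widetilde\Gamma_0,\widetilde\Gamma_1)\}$ be a triple for the adjoint pair $\{S,\widetilde S\}$ satisfying (G), (M) and $\operatorname{ran}\Gamma_0=\operatorname{ran}\widetilde\Gamma_0=\mathcal G$, with $\rho(A_0)\neq\emptyset$, $\gamma$-fields $\gamma,\widetilde\gamma$ and Weyl function $M$. Let $B_1,B_2$ be closable operators in $\mathcal G$ and suppose that for some $\lambda_0\in\rho(A_0)$ the operator $M(\lambda_0)B_1$ is closable and: (i) $1\in\rho(B_2\overline{M(\lambda_0)B_1})$; (ii) $\operatorname{ran}(B_2\overline{M(\lambda_0)B_1})\subset\operatorname{dom}B_1$; (iii) $\operatorname{ran}(\Gamma_1\upharpoonright\ker\Gamma_0)\subset\operatorname{dom}(B_1B_2)$. Then $A_{B_1B_2}$ is a closed operator with nonempty resolvent set, and for all $\lambda\in\rho(A_0)\cap\rho(A_{B_1B_2})$ $(A_{B_1B_2}-\lambda)^{-1}=(A_0-\lambda)^{-1}+\gamma(\lambda)B_1(I-B_2M(\lambda)B_1)^{-1}B_2\widetilde\gamma(\overline\lambda)^*$. In particular, for a closable operator $B$ in $\mathcal G$ such that $1\in\rho(BM(\lambda_0))$ for some $\lambda_0\in\rho(A_0)$ and $\operatorname{ran}(\Gamma_1\upharpoonright\ker\Gamma_0)\subset\operatorname{dom}B$, the operator $A_B$ is closed with nonempty resolvent set and $(A_B-\lambda)^{-1}=(A_0-\lambda)^{-1}+\gamma(\lambda)(I-BM(\lambda))^{-1}B\widetilde\gamma(\overline\lambda)^*$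 for all $\lambda\in\rho(A_0)\cap\rho(A_B)$.
   Context: Let $\mathfrak H$ be a separable Hilbert space. An adjoint pair $\{S,\widetilde S\}$ consists of densely defined closed operators $S,\widetilde S$ in $\mathfrak H$ with $(Sf,g)=(f,\widetilde Sg)$ for all $f\in\operatorname{dom}S$, $g\in\operatorname{dom}\widetilde S$. Fix operators $T\subset S^*$ and $\widetilde T\subset\widetilde S^*$ which are cores, i.e. $\overline T=S^*$ and $\overline{\widetilde T}=\widetilde S^*$. A triple $\{\mathcal G,(\Gamma_0,\Gamma_1),(\widetilde\Gamma_0,\widetilde\Gamma_1)\}$ for $\{S,\widetilde S\}$ consists of a Hilbert space $\mathcal G$ and linear maps $\Gamma_0,\Gamma_1:\operatorname{dom}T\to\mathcal G$, $\widetilde\Gamma_0,\widetilde\Gamma_1:\operatorname{dom}\widetilde T\to\mathcal G$. Put $A_0:=T\upharpoonright\ker\Gamma_0$ and $\widetilde A_0:=\widetilde T\upharpoonright\ker\widetilde\Gamma_0$. Conditions: (G) $(Tf,g)_{\mathfrak H}-(f,\widetilde Tg)_{\mathfrak H}=(\Gamma_1f,\widetilde\Gamma_0g)_{\mathcal G}-(\Gamma_0f,\widetilde\Gamma_1g)_{\mathcal G}$ for all $f\in\operatorname{dom}T$, $g\in\operatorname{dom}\widetilde T$; (M) $A_0^*=\widetilde A_0$ and $\widetilde A_0^*=A_0$. For $\lambda\in\rho(A_0)$ one has $\operatorname{dom}T=\ker\Gamma_0\dotplus\ker(T-\lambda)$, so $\Gamma_0\upharpoonright\ker(T-\lambda)$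 is injective; similarly for $\widetilde T$. The $\gamma$-fields are $\gamma(\lambda):=(\Gamma_0\upharpoonright\ker(T-\lambda))^{-1}$, $\widetilde\gamma(\mu):=(\widetilde\Gamma_0\upharpoonright\ker(\widetilde T-\mu))^{-1}$; the Weyl function is $M(\lambda):=\Gamma_1\gamma(\lambda)$, $\lambda\in\rho(A_0)$. Products of operators have their natural domains, e.g. $\operatorname{dom}(B_1B_2)=\{\varphi\in\operatorname{dom}B_2:B_2\varphi\in\operatorname{dom}B_1\}$; $(I-B_2M(\lambda)B_1)^{-1}$ is the inverse of the injective operator $I-B_2M(\lambda)B_1$. For a (not necessarily closed) operator $C$ in $\mathcal G$, $1\in\rho(C)$ means $I-C$ is a bijection of $\operatorname{dom}C$ onto $\mathcal G$ with bounded inverse; similarly $\rho(A)$ for operators in $\mathfrak H$. Define $A_{B_1B_2}f:=Tf$ on $\operatorname{dom}A_{B_1B_2}:=\{f\in\operatorname{dom}T:\Gamma_1f\in\operatorname{dom}(B_1B_2),\ B_1B_2\Gamma_1f=\Gamma_0f\}$ and $A_Bf:=Tf$ on $\operatorname{dom}A_B:=\{f\in\operatorname{dom}T:\Gamma_1f\in\operatorname{dom}B,\ B\Gamma_1f=\Gamma_0f\}$. *)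

theory Defs
  imports "HOL-Analysis.Analysis"
begin

class chilbert = banach +
  fixes scaleC :: "complex \<Rightarrow> 'a \<Rightarrow> 'a"
    and cinner :: "'a \<Rightarrow> 'a \<Rightarrow> complex"
  assumes scaleC_add_right: "scaleC a (x + y) = scaleC a x + scaleC a y"
    and scaleC_add_left: "scaleC (a + b) x = scaleC a x + scaleC b x"
    and scaleC_scaleC: "scaleC a (scaleC b x) = scaleC (a * b) x"
    and scaleC_one: "scaleC 1 x = x"
    and scaleR_scaleC: "scaleR r x = scaleC (complex_of_real r) x"
    and cinner_commute: "cinner x y = cnj (cinner y x)"
    and cinner_add_left: "cinner (x + y) z = cinner x z + cinner y z"
    and cinner_scaleC_left: "cinner (scaleC c x) y = c * cinner x y"
    and cinner_self_norm: "cinner x x = complex_of_real ((norm x)\<^sup>2)"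

text \<open>A (possibly unbounded, not necessarily everywhere defined) linear operator from
'a to 'b is represented by its graph, a set of pairs.\<close>

type_synonym ('a, 'b) lop = "('a \<times> 'b) set"

definition is_lop :: "('a::chilbert, 'b::chilbert) lop \<Rightarrow> bool" where
  "is_lop G \<longleftrightarrow> (0, 0) \<in> G
     \<and> (\<forall>x y x' y'. (x, y) \<in> G \<longrightarrow> (x', y') \<in> G \<longrightarrow> (x + x', y + y') \<in> G)
     \<and> (\<forall>c x y. (x, y) \<in> G \<longrightarrow> (scaleC c x, scaleC c y) \<in> G)
     \<and> (\<forall>y. (0, y) \<in> G \<longrightarrow> y = 0)"

definition ldom :: "('a, 'b) lop \<Rightarrow> 'a set" where "ldom G = fst ` G"
definition lran :: "('a, 'b) lop \<Rightarrow> 'b set" where "lran G = snd ` G"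

definition closed_lop :: "('a::chilbert, 'b::chilbert) lop \<Rightarrow> bool" where
  "closed_lop G \<longleftrightarrow> is_lop G \<and> closed G"

definition closable :: "('a::chilbert, 'b::chilbert) lop \<Rightarrow> bool" where
  "closable G \<longleftrightarrow> is_lop G \<and> is_lop (closure G)"

definition densely_defined :: "('a::chilbert, 'b::chilbert) lop \<Rightarrow> bool" where
  "densely_defined G \<longleftrightarrow> closure (ldom G) = UNIV"

definition ladj :: "('a::chilbert, 'b::chilbert) lop \<Rightarrow> ('b, 'a) lop" where
  "ladj G = {(g, h). \<forall>f y. (f, y) \<in> G \<longrightarrow> cinner y g = cinner f h}"

text \<open>Product A B with natural domain: first B, then A.\<close>
definition lcomp :: "('b, 'c) lop \<Rightarrow> ('a, 'b) lop \<Rightarrow> ('a, 'c) lop" where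
  "lcomp A B = B O A"

definition lsum :: "('a, 'b::plus) lop \<Rightarrow> ('a, 'b) lop \<Rightarrow> ('a, 'b) lop" where
  "lsum P Q = {(x, y + z) | x y z. (x, y) \<in> P \<and> (x, z) \<in> Q}"

text \<open>A - \<lambda> and I - C; inverses are converses of graphs.\<close>
definition lshift :: "('a::chilbert, 'a) lop \<Rightarrow> complex \<Rightarrow> ('a, 'a) lop" where
  "lshift A l = {(x, y - scaleC l x) | x y. (x, y) \<in> A}"

definition lid_minus :: "('a::chilbert, 'a) lop \<Rightarrow> ('a, 'a) lop" where
  "lid_minus C = {(x, x - y) | x y. (x, y) \<in> C}"

definition resolvent_set :: "('a::chilbert, 'a) lop \<Rightarrow> complex set" where
  "resolvent_set A = {l. lran (lshift A l) = UNIV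
      \<and> (\<forall>x. (x, 0) \<in> lshift A l \<longrightarrow> x = 0)
      \<and> (\<exists>K. \<forall>x y. (x, y) \<in> lshift A l \<longrightarrow> norm x \<le> K * norm y)}"

definition clinear_on :: "'a::chilbert set \<Rightarrow> ('a \<Rightarrow> 'b::chilbert) \<Rightarrow> bool" where
  "clinear_on D f \<longleftrightarrow> (\<forall>x\<in>D. \<forall>y\<in>D. f (x + y) = f x + f y)
     \<and> (\<forall>c. \<forall>x\<in>D. f (scaleC c x) = scaleC c (f x))"

text \<open>Restriction of T to ker \<Gamma>0 (this gives A0 and its tilde counterpart).\<close>
definition ker_restr :: "('a::chilbert, 'a) lop \<Rightarrow> ('a \<Rightarrow> 'b::chilbert) \<Rightarrow> ('a, 'a) lop" where
  "ker_restr T G0 = {(f, y). (f, y) \<in> T \<and> G0 f = 0}"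

definition gamma_field :: "('a::chilbert, 'a) lop \<Rightarrow> ('a \<Rightarrow> 'b::chilbert) \<Rightarrow> complex \<Rightarrow> ('b, 'a) lop" where
  "gamma_field T G0 l = {(G0 f, f) | f. (f, scaleC l f) \<in> T}"

definition weyl :: "('a::chilbert, 'a) lop \<Rightarrow> ('a \<Rightarrow> 'b::chilbert) \<Rightarrow> ('a \<Rightarrow> 'b) \<Rightarrow> complex \<Rightarrow> ('b, 'b) lop" where
  "weyl T G0 G1 l = lcomp {(f, G1 f) | f. f \<in> ldom T} (gamma_field T G0 l)"

definition A_ext :: "('a::chilbert, 'a) lop \<Rightarrow> ('a \<Rightarrow> 'b::chilbert) \<Rightarrow> ('a \<Rightarrow> 'b) \<Rightarrow> ('b, 'b) lop \<Rightarrow> ('a, 'a) lop" where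
  "A_ext T G0 G1 B = {(f, y). (f, y) \<in> T \<and> (G1 f, G0 f) \<in> B}"

end

theory Submission
  imports Defs "HOL-Analysis.Analysis"
begin

text \<open>For \<open>l \<in> \<rho>(A0)\<close> every \<open>f \<in> dom T\<close> splits as \<open>f = (A0 - l)\<inverse> h + \<gamma>(l) \<Gamma>0 f\<close> with
  \<open>h = (T - l) f\<close>. Imposing the boundary condition \<open>B1 B2 \<Gamma>1 f = \<Gamma>0 f\<close> on this splitting, and
  using Green's identity in the form \<open>\<gamma>'(cnj l)\<^sup>* = \<Gamma>1 (A0 - l)\<inverse>\<close> (primes mark the objects
  built from \<open>Tt\<close>, \<open>Gt0\<close>, \<open>Gt1\<close>), shows that
  \<open>(A\<^sub>B\<^sub>1\<^sub>B\<^sub>2 - l) f = h\<close> holds exactly when \<open>f = (A0 - l)\<inverse> h + \<gamma>(l) \<phi>\<close> with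
  \<open>\<phi> = B1 (I - B2 M(l) B1)\<inverse> B2 \<gamma>'(cnj l)\<^sup>* h\<close>; this is the resolvent formula.
  At \<open>l0\<close>, conditions (i)-(iii) make such an \<open>f\<close> exist and be unique for every \<open>h\<close>, and the closed
  graph theorem bounds \<open>h \<mapsto> \<phi>\<close>: composing the bounded maps \<open>\<gamma>'(cnj l0)\<^sup>*\<close> and
  \<open>(I - C)\<inverse>\<close> with the closable \<open>B2\<close> and \<open>B1\<close> keeps the graph closed while the composite stays
  everywhere defined. So \<open>l0 \<in> \<rho>(A\<^sub>B\<^sub>1\<^sub>B\<^sub>2)\<close>, which also makes \<open>A\<^sub>B\<^sub>1\<^sub>B\<^sub>2\<close> closed; a single \<open>B\<close> is the
  case \<open>B1 = I\<close>, \<open>B2 = B\<close>. Only Green's identity, one half of (M) and the surjectivity of \<open>\<Gamma>0\<close>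
  and \<open>\<Gamma>0'\<close> are used; separability, the adjoint pair and the core property are not.\<close>

section \<open>Complex Hilbert spaces\<close>

lemma scaleC_zero_right [simp]: "scaleC c (0::'a::chilbert) = 0"
  using scaleC_add_right[of c 0 0] by simp

lemma scaleC_zero_left [simp]: "scaleC 0 (x::'a::chilbert) = 0"
  using scaleC_add_left[of 0 0 x] by simp

lemma scaleC_minus_one: "scaleC (-1) (x::'a::chilbert) = - x"
proof -
  have "scaleC 1 x + scaleC (-1) x = 0" using scaleC_add_left[of 1 "-1" x] by simp
  then show ?thesis using add_eq_0_iff scaleC_one by metis
qed

lemma scaleC_minus_right: "scaleC c (- (x::'a::chilbert)) = - scaleC c x"
proof -
  have "scaleC c (- x) = scaleC (-1) (scaleC c x)"
    by (simp only: scaleC_minus_one[symmetric] scaleC_scaleC mult.commute)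
  then show ?thesis by (simp only: scaleC_minus_one)
qed

lemma scaleC_diff_right: "scaleC c ((x::'a::chilbert) - y) = scaleC c x - scaleC c y"
  by (simp only: diff_conv_add_uminus[of x y] scaleC_add_right scaleC_minus_right) simp

lemma cinner_zero_left [simp]: "cinner 0 (y::'a::chilbert) = 0"
  using cinner_add_left[of 0 0 y] by simp

lemma cinner_add_right: "cinner (x::'a::chilbert) (y + z) = cinner x y + cinner x z"
  by (metis cinner_add_left cinner_commute complex_cnj_add)

lemma cinner_scaleC_right: "cinner (x::'a::chilbert) (scaleC c y) = cnj c * cinner x y"
  by (metis cinner_commute cinner_scaleC_left complex_cnj_mult)

lemma cinner_zero_right [simp]: "cinner (x::'a::chilbert) 0 = 0"
  using cinner_add_right[of x 0 0] by simp

lemma cinner_minus_left: "cinner (- (x::'a::chilbert)) y = - cinner x y"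
  using cinner_add_left[of x "- x" y] by (simp add: add_eq_0_iff)

lemma cinner_minus_right: "cinner (x::'a::chilbert) (- y) = - cinner x y"
  using cinner_add_right[of x y "- y"] by (simp add: add_eq_0_iff)

lemma cinner_diff_left: "cinner ((x::'a::chilbert) - y) z = cinner x z - cinner y z"
  by (simp only: diff_conv_add_uminus[of x y] cinner_add_left cinner_minus_left) simp

lemma cinner_diff_right: "cinner (x::'a::chilbert) (y - z) = cinner x y - cinner x z"
  by (simp only: diff_conv_add_uminus[of y z] cinner_add_right cinner_minus_right) simp

lemma cinner_eq_zero_iff [simp]: "cinner x x = 0 \<longleftrightarrow> (x::'a::chilbert) = 0"
  using cinner_self_norm[of x] by simp

lemma cinner_ext_left: "(\<And>y. cinner y x = 0) \<Longrightarrow> (x::'a::chilbert) = 0"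
  using cinner_eq_zero_iff by blast

lemma cinner_ext_right: "(\<And>y. cinner x y = 0) \<Longrightarrow> (x::'a::chilbert) = 0"
  using cinner_eq_zero_iff by blast

lemma norm_scaleC: "norm (scaleC c (x::'a::chilbert)) = cmod c * norm x"
proof -
  have "complex_of_real ((norm (scaleC c x))\<^sup>2) = cinner (scaleC c x) (scaleC c x)"
    by (rule cinner_self_norm[symmetric])
  also have "\<dots> = (c * cnj c) * cinner x x"
    by (simp add: cinner_scaleC_left cinner_scaleC_right mult.assoc)
  also have "\<dots> = complex_of_real ((cmod c * norm x)\<^sup>2)"
    by (simp add: complex_norm_square[symmetric] cinner_self_norm power_mult_distrib)
  finally have "(norm (scaleC c x))\<^sup>2 = (cmod c * norm x)\<^sup>2"
    unfolding of_real_eq_iff .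
  then show ?thesis
    by (simp add: power2_eq_iff_nonneg)
qed

lemma norm_diff_projection_squared:
  fixes w v :: "'a::chilbert"
  assumes "v \<noteq> 0"
  shows "(norm (w - scaleC (cinner w v / complex_of_real ((norm v)\<^sup>2)) v))\<^sup>2
       = (norm w)\<^sup>2 - (cmod (cinner w v))\<^sup>2 / (norm v)\<^sup>2"
proof -
  define c where "c = cinner w v"
  define n where "n = (norm v)\<^sup>2"
  define t where "t = c / complex_of_real n"
  have n0: "complex_of_real n \<noteq> 0" using assms by (simp add: n_def)
  have cc: "c * cnj c = complex_of_real ((cmod c)\<^sup>2)" by (rule complex_norm_square[symmetric])
  have vw: "cinner v w = cnj c" by (simp add: c_def cinner_commute[of v w])
  have vv: "cinner v v = complex_of_real n" by (simp add: n_def cinner_self_norm)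
  have "complex_of_real ((norm (w - scaleC t v))\<^sup>2) = cinner (w - scaleC t v) (w - scaleC t v)"
    by (simp add: cinner_self_norm)
  also have "\<dots> = cinner w w - cnj t * cinner w v - t * cinner v w + t * cnj t * cinner v v"
    by (simp add: cinner_diff_left cinner_diff_right cinner_scaleC_left cinner_scaleC_right
        algebra_simps)
  also have "\<dots> = complex_of_real ((norm w)\<^sup>2) - complex_of_real ((cmod c)\<^sup>2 / n)"
    unfolding vw vv c_def[symmetric] t_def using cc n0
    by (simp add: cinner_self_norm field_simps)
  finally have "(norm (w - scaleC t v))\<^sup>2 = (norm w)\<^sup>2 - (cmod c)\<^sup>2 / n"
    by (metis of_real_diff of_real_eq_iff)
  then show ?thesis by (simp add: t_def c_def n_def)
qed

lemma norm_cinner_le: "cmod (cinner x y) \<le> norm x * norm (y::'a::chilbert)"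
proof (cases "y = 0")
  case False
  have "0 \<le> (norm x)\<^sup>2 - (cmod (cinner x y))\<^sup>2 / (norm y)\<^sup>2"
    using norm_diff_projection_squared[OF False, of x] by (metis zero_le_power2)
  then have "(cmod (cinner x y))\<^sup>2 \<le> (norm x * norm y)\<^sup>2"
    using False by (simp add: field_simps power_mult_distrib)
  then show ?thesis
    by (rule power2_le_imp_le) simp
qed simp

lemma bounded_bilinear_cinner: "bounded_bilinear (cinner :: 'a::chilbert \<Rightarrow> 'a \<Rightarrow> complex)"
proof
  fix a a' b b' :: 'a and r :: real
  show "cinner (a + a') b = cinner a b + cinner a' b" by (rule cinner_add_left)
  show "cinner a (b + b') = cinner a b + cinner a b'" by (rule cinner_add_right)
  show "cinner (r *\<^sub>R a) b = r *\<^sub>R cinner a b"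
    by (simp add: scaleR_scaleC cinner_scaleC_left scaleR_conv_of_real)
  show "cinner a (r *\<^sub>R b) = r *\<^sub>R cinner a b"
    by (simp add: scaleR_scaleC cinner_scaleC_right scaleR_conv_of_real)
  show "\<exists>K. \<forall>a b::'a. cmod (cinner a b) \<le> norm a * norm b * K"
    by (rule exI[of _ 1]) (simp add: norm_cinner_le)
qed

lemmas tendsto_cinner = bounded_bilinear.tendsto[OF bounded_bilinear_cinner]

lemma bounded_linear_scaleC: "bounded_linear (scaleC c :: 'a::chilbert \<Rightarrow> 'a)"
proof (rule bounded_linear_intro)
  fix x y :: 'a and r :: real
  show "scaleC c (x + y) = scaleC c x + scaleC c y" by (rule scaleC_add_right)
  show "scaleC c (r *\<^sub>R x) = r *\<^sub>R scaleC c x" by (simp only: scaleR_scaleC scaleC_scaleC mult.commute)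
  show "norm (scaleC c x) \<le> norm x * cmod c" by (simp add: norm_scaleC mult.commute)
qed

lemmas tendsto_scaleC = bounded_linear.tendsto[OF bounded_linear_scaleC]

lemma parallelogram_law:
  fixes a b :: "'a::chilbert"
  shows "(norm (a + b))\<^sup>2 + (norm (a - b))\<^sup>2 = 2 * (norm a)\<^sup>2 + 2 * (norm b)\<^sup>2"
proof -
  have "complex_of_real ((norm (a + b))\<^sup>2 + (norm (a - b))\<^sup>2)
        = cinner (a + b) (a + b) + cinner (a - b) (a - b)"
    by (simp add: cinner_self_norm)
  also have "\<dots> = 2 * cinner a a + 2 * cinner b b"
    by (simp add: cinner_add_left cinner_add_right cinner_diff_left cinner_diff_right)
  also have "\<dots> = complex_of_real (2 * (norm a)\<^sup>2 + 2 * (norm b)\<^sup>2)"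
    by (simp add: cinner_self_norm)
  finally show ?thesis using of_real_eq_iff by blast
qed

section \<open>The Riesz representation theorem\<close>

definition csubspace :: "'a::chilbert set \<Rightarrow> bool" where
  "csubspace N \<longleftrightarrow> 0 \<in> N \<and> (\<forall>x\<in>N. \<forall>y\<in>N. x + y \<in> N) \<and> (\<forall>c. \<forall>x\<in>N. scaleC c x \<in> N)"

lemma parallelogram_near_minimum:
  fixes a b :: "'a::chilbert"
  assumes "0 \<le> d" "0 \<le> e" "norm a \<le> d + e" "norm b \<le> d + e" "2 * d \<le> norm (a + b)"
  shows "(norm (a - b))\<^sup>2 \<le> 4 * e * (2 * d + e)"
proof -
  have "(norm a)\<^sup>2 \<le> (d + e)\<^sup>2" "(norm b)\<^sup>2 \<le> (d + e)\<^sup>2"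
    using assms by (auto intro: power_mono)
  moreover have "(2 * d)\<^sup>2 \<le> (norm (a + b))\<^sup>2"
    using assms by (intro power_mono) auto
  ultimately show ?thesis
    using parallelogram_law[of a b] by (simp add: power2_eq_square algebra_simps)
qed

text \<open>The midpoint of two terms lies in the subspace, so the parallelogram law pushes the
  terms together.\<close>

lemma minimizing_sequence_Cauchy:
  fixes z :: "'a::chilbert"
  assumes N: "csubspace N" and XN: "\<And>k. X k \<in> N" and d0: "0 \<le> d"
    and dle: "\<And>v. v \<in> N \<Longrightarrow> d \<le> norm (z - v)"
    and Xd: "\<And>k. norm (z - X k) < d + 1 / (real k + 1)"
  shows "Cauchy X"
proof (rule CauchyI)
  have near: "(norm (X j - X k))\<^sup>2 \<le> 4 * (1 / (real m + 1)) * (2 * d + 1)"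
    if "m \<le> j" "m \<le> k" for j k m
  proof -
    define e where "e = 1 / (real m + 1)"
    have e: "0 \<le> e" "e \<le> 1" by (auto simp: e_def)
    have "1 / (real j + 1) \<le> e" "1 / (real k + 1) \<le> e"
      using that by (auto simp: e_def divide_simps)
    then have a: "norm (z - X j) \<le> d + e" and b: "norm (z - X k) \<le> d + e"
      using Xd[of j] Xd[of k] by linarith+
    have "scaleC (1/2) (X j + X k) \<in> N" using N XN by (simp add: csubspace_def)
    then have "2 * d \<le> 2 * norm (z - scaleC (1/2) (X j + X k))" using dle by simp
    also have "\<dots> = norm (scaleC 2 (z - scaleC (1/2) (X j + X k)))" by (simp add: norm_scaleC)
    also have "scaleC 2 (z - scaleC (1/2) (X j + X k)) = (z - X j) + (z - X k)"
      using scaleC_add_left[of 1 1 z]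
      by (simp add: scaleC_diff_right scaleC_scaleC scaleC_one scaleC_add_right)
    finally have "(norm ((z - X j) - (z - X k)))\<^sup>2 \<le> 4 * e * (2 * d + e)"
      using parallelogram_near_minimum[OF d0 e(1) a b] by blast
    also have "\<dots> \<le> 4 * e * (2 * d + 1)" using e d0 by (intro mult_left_mono) auto
    finally show ?thesis by (simp add: e_def norm_minus_commute)
  qed
  fix r :: real assume r: "0 < r"
  obtain m :: nat where "4 * (2 * d + 1) / r\<^sup>2 < real m"
    using reals_Archimedean2 by blast
  then have m: "4 * (1 / (real m + 1)) * (2 * d + 1) < r\<^sup>2"
    using r d0 by (simp add: field_simps) (smt (verit) zero_less_power)
  have "norm (X j - X k) < r" if "m \<le> j" "m \<le> k" for j k
    using near[OF that] m r by (smt (verit) power_less_imp_less_base)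
  then show "\<exists>m. \<forall>j\<ge>m. \<forall>k\<ge>m. norm (X j - X k) < r" by blast
qed

lemma csubspace_closest_point:
  fixes z :: "'a::chilbert"
  assumes N: "csubspace N" and closed: "closed N"
  shows "\<exists>n\<in>N. \<forall>v\<in>N. norm (z - n) \<le> norm (z - v)"
proof -
  define d where "d = (INF v\<in>N. norm (z - v))"
  have N0: "0 \<in> N" using N by (simp add: csubspace_def)
  have bdd: "bdd_below ((\<lambda>v. norm (z - v)) ` N)" by (auto intro: bdd_belowI[of _ 0])
  have dle: "d \<le> norm (z - v)" if "v \<in> N" for v
    unfolding d_def using that bdd by (intro cInf_lower) auto
  have d0: "0 \<le> d" unfolding d_def using N0 by (intro cINF_greatest) auto
  have "\<exists>v\<in>N. norm (z - v) < d + 1 / (real k + 1)" for k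
    using cINF_less_iff[OF _ bdd, of "d + 1 / (real k + 1)"] N0 unfolding d_def[symmetric] by auto
  then obtain X where XN: "\<And>k. X k \<in> N" and Xd: "\<And>k. norm (z - X k) < d + 1 / (real k + 1)"
    by metis
  have "Cauchy X" by (rule minimizing_sequence_Cauchy[OF N XN d0 dle Xd])
  then obtain n where lim: "X \<longlonglongrightarrow> n" using Cauchy_convergent_iff convergent_def by blast
  have "n \<in> N" using closed lim XN closed_sequential_limits by blast
  moreover have "norm (z - n) \<le> d"
  proof (rule LIMSEQ_le_const)
    have "(\<lambda>k. d + 1 / (real k + 1) + norm (X k - n)) \<longlonglongrightarrow> d + 0 + norm (n - n)"
      using LIMSEQ_inverse_real_of_nat
      by (intro tendsto_intros lim) (simp add: inverse_eq_divide add.commute)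
    then show "(\<lambda>k. d + 1 / (real k + 1) + norm (X k - n)) \<longlonglongrightarrow> d" by simp
    have "norm (z - n) \<le> d + 1 / (real k + 1) + norm (X k - n)" for k
      using Xd[of k] norm_triangle_ineq[of "z - X k" "X k - n"] by simp
    then show "\<exists>N. \<forall>k\<ge>N. norm (z - n) \<le> d + 1 / (real k + 1) + norm (X k - n)" by blast
  qed
  ultimately show ?thesis using dle by (meson order_trans)
qed

lemma closest_point_orthogonal:
  fixes z :: "'a::chilbert"
  assumes N: "csubspace N" and n: "n \<in> N" and min: "\<forall>v\<in>N. norm (z - n) \<le> norm (z - v)"
    and v: "v \<in> N"
  shows "cinner (z - n) v = 0"
proof (rule ccontr)
  assume ne: "cinner (z - n) v \<noteq> 0"
  then have v0: "v \<noteq> 0" by auto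
  define t where "t = cinner (z - n) v / complex_of_real ((norm v)\<^sup>2)"
  have "n + scaleC t v \<in> N" using N n v by (simp add: csubspace_def)
  then have "norm (z - n) \<le> norm ((z - n) - scaleC t v)"
    using min by (simp add: diff_diff_eq)
  then have "(norm (z - n))\<^sup>2 \<le> (norm ((z - n) - scaleC t v))\<^sup>2" by (simp add: power_mono)
  also have "\<dots> = (norm (z - n))\<^sup>2 - (cmod (cinner (z - n) v))\<^sup>2 / (norm v)\<^sup>2"
    unfolding t_def by (rule norm_diff_projection_squared[OF v0])
  finally have "(cmod (cinner (z - n) v))\<^sup>2 / (norm v)\<^sup>2 \<le> 0" by simp
  moreover have "(cmod (cinner (z - n) v))\<^sup>2 / (norm v)\<^sup>2 > 0" using ne v0 by simp
  ultimately show False by simp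
qed

lemma bounded_functional_kernel_closed:
  fixes F :: "'a::chilbert \<Rightarrow> complex"
  assumes diff: "\<And>x y. F (x - y) = F x - F y" and bound: "\<And>x. cmod (F x) \<le> K * norm x"
  shows "closed {x. F x = 0}"
  unfolding closed_sequential_limits
proof (intro allI impI, elim conjE)
  fix X x assume X0: "\<forall>n. X n \<in> {x. F x = 0}" and lim: "X \<longlonglongrightarrow> x"
  have "(\<lambda>n. K * norm (X n - x)) \<longlonglongrightarrow> K * norm (x - x)"
    by (intro tendsto_intros lim)
  moreover have "cmod (F x) \<le> K * norm (X n - x)" for n
    using bound[of "X n - x"] X0 by (simp add: diff)
  ultimately have "cmod (F x) \<le> 0"
    by (intro LIMSEQ_le_const[of "\<lambda>n. K * norm (X n - x)"]) auto
  then show "x \<in> {x. F x = 0}" by simp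
qed

theorem riesz_representation:
  fixes F :: "'a::chilbert \<Rightarrow> complex"
  assumes add: "\<And>x y. F (x + y) = F x + F y"
    and scale: "\<And>c x. F (scaleC c x) = c * F x"
    and bound: "\<And>x. cmod (F x) \<le> K * norm x"
  shows "\<exists>g. \<forall>x. F x = cinner x g"
proof (cases "\<forall>x. F x = 0")
  case False
  then obtain z where Fz: "F z \<noteq> 0" by blast
  have diff: "F (x - y) = F x - F y" for x y
    using add[of x "scaleC (-1) y"] scale[of "-1" y] by (simp add: scaleC_minus_one)
  define N where "N = {x. F x = 0}"
  have N: "csubspace N" using add[of 0 0] by (simp add: N_def csubspace_def add scale)
  have "closed N" unfolding N_def by (rule bounded_functional_kernel_closed[OF diff bound])
  then obtain n where n: "n \<in> N" and min: "\<forall>v\<in>N. norm (z - n) \<le> norm (z - v)"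
    using csubspace_closest_point[OF N] by blast
  define w where "w = z - n"
  have orth: "v \<in> N \<Longrightarrow> cinner w v = 0" for v
    unfolding w_def by (rule closest_point_orthogonal[OF N n min])
  have Fw: "F w = F z" using n by (simp add: w_def diff N_def)
  then have w0: "w \<noteq> 0" using Fz add[of 0 0] by auto
  have "F x = cinner x (scaleC (cnj (F w) / complex_of_real ((norm w)\<^sup>2)) w)" for x
  proof -
    define s where "s = F x / F w"
    have "x - scaleC s w \<in> N" using Fw Fz by (simp add: N_def diff scale s_def)
    then have "cinner (x - scaleC s w) w = 0"
      using orth by (metis cinner_commute complex_cnj_zero)
    then have "cinner x w = s * complex_of_real ((norm w)\<^sup>2)"
      by (simp add: cinner_diff_left cinner_scaleC_left cinner_self_norm)
    then show ?thesis unfolding cinner_scaleC_right s_def using w0 Fw Fz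
      by (simp add: field_simps)
  qed
  then show ?thesis by blast
qed (intro exI[of _ 0], simp)

section \<open>The closed graph theorem\<close>

lemma baire_sublevel_ball:
  fixes f :: "'a::banach \<Rightarrow> 'b::real_normed_vector"
  assumes diff: "\<And>x y. f (x - y) = f x - f y"
  shows "\<exists>c r. 0 < r \<and> (\<forall>z e. norm z < r \<longrightarrow> 0 < e \<longrightarrow> (\<exists>w. norm (f w) \<le> c \<and> norm (z - w) < e))"
proof -
  define W where "W = (\<lambda>n::nat. {x. norm (f x) \<le> real n})"
  have "\<exists>n. interior (closure (W n)) \<noteq> {}"
  proof (rule ccontr)
    assume "\<not> ?thesis"
    then have "euclidean interior_of \<Union>(range (\<lambda>n. closure (W n))) = {}"
      using completely_metrizable_space_euclidean by (intro Baire_category_alt) auto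
    moreover have "x \<in> W (nat \<lceil>norm (f x)\<rceil>)" for x
      by (simp add: W_def)
    then have "\<Union>(range (\<lambda>n. closure (W n))) = UNIV" using closure_subset by blast
    ultimately show False by simp
  qed
  then obtain n x0 where "x0 \<in> interior (closure (W n))" by blast
  then obtain r where r: "0 < r" "ball x0 r \<subseteq> closure (W n)"
    using open_interior[of "closure (W n)"] interior_subset unfolding open_contains_ball by blast
  have near: "\<exists>a\<in>W n. dist a x < e" if "x \<in> ball x0 r" "0 < e" for x e
    using that r(2) closure_approachable by blast
  have "\<exists>w. norm (f w) \<le> 2 * real n \<and> norm (z - w) < e" if "norm z < r" "0 < e" for z e
  proof -
    have e2: "0 < e/2" using that by simp
    have "x0 + z \<in> ball x0 r" using that by (simp add: dist_norm)
    then obtain a where a: "a \<in> W n" "dist a (x0 + z) < e/2"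
      using near[OF _ e2] by blast
    have "x0 \<in> ball x0 r" using r by simp
    then obtain b where b: "b \<in> W n" "dist b x0 < e/2"
      using near[OF _ e2] by blast
    have "norm (f (a - b)) \<le> 2 * real n"
      using a(1) b(1) norm_triangle_ineq4[of "f a" "f b"] by (simp add: W_def diff)
    moreover have "z - (a - b) = (b - x0) - (a - (x0 + z))" by (simp add: algebra_simps)
    then have "norm (z - (a - b)) \<le> norm (b - x0) + norm (a - (x0 + z))"
      by (metis norm_triangle_ineq4)
    then have "norm (z - (a - b)) < e" using a(2) b(2) by (simp add: dist_norm)
    ultimately show ?thesis by blast
  qed
  then show ?thesis using r(1) by blast
qed

lemma linear_approximately_bounded:
  fixes f :: "'a::banach \<Rightarrow> 'b::real_normed_vector"
  assumes diff: "\<And>x y. f (x - y) = f x - f y" and scale: "\<And>r x. f (r *\<^sub>R x) = r *\<^sub>R f x"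
  shows "\<exists>M\<ge>0. \<forall>z e. 0 < e \<longrightarrow> (\<exists>w. norm (f w) \<le> M * norm z \<and> norm (z - w) < e)"
proof -
  obtain c r where r: "0 < r"
    and ball: "\<And>z e. norm z < r \<Longrightarrow> 0 < e \<Longrightarrow> \<exists>w. norm (f w) \<le> c \<and> norm (z - w) < e"
    using baire_sublevel_ball[of f] diff by metis
  have c: "0 \<le> c" using ball[of 0 1] r by (auto intro: order_trans[OF norm_ge_zero])
  have "\<exists>w. norm (f w) \<le> (2 * c / r) * norm z \<and> norm (z - w) < e" if e: "0 < e" for z e
  proof (cases "z = 0")
    case True then show ?thesis using e diff[of 0 0] by (intro exI[of _ 0]) simp
  next
    case False
    \<comment> \<open>rescale \<open>z\<close> into the ball of radius \<open>r\<close>, approximate there, and scale back\<close>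
    define s where "s = r / (2 * norm z)"
    have s: "0 < s" "norm (s *\<^sub>R z) < r" using False r by (simp_all add: s_def)
    have "0 < s * e" using s e by simp
    then obtain w where w: "norm (f w) \<le> c" "norm (s *\<^sub>R z - w) < s * e"
      using ball[OF s(2)] by blast
    have "norm (f ((1/s) *\<^sub>R w)) = norm (f w) / s" using s by (simp add: scale)
    also have "\<dots> \<le> (2 * c / r) * norm z" using w(1) s False by (simp add: s_def field_simps)
    finally have "norm (f ((1/s) *\<^sub>R w)) \<le> (2 * c / r) * norm z" .
    moreover have "z - (1/s) *\<^sub>R w = (1/s) *\<^sub>R (s *\<^sub>R z - w)" using s by (simp add: algebra_simps)
    then have "norm (z - (1/s) *\<^sub>R w) = norm (s *\<^sub>R z - w) / s" using s by simp
    then have "norm (z - (1/s) *\<^sub>R w) < e" using w(2) s by (simp add: divide_less_eq mult.commute)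
    ultimately show ?thesis by blast
  qed
  moreover have "0 \<le> 2 * c / r" using c r by simp
  ultimately show ?thesis by blast
qed

lemma approximating_series:
  fixes f :: "'a::real_normed_vector \<Rightarrow> 'b::real_normed_vector"
  assumes M: "0 \<le> M" and z: "z \<noteq> 0"
    and approx: "\<And>z e. 0 < e \<Longrightarrow> \<exists>w. norm (f w) \<le> M * norm z \<and> norm (z - w) < e"
  obtains w where "(\<lambda>k. \<Sum>i<k. w i) \<longlonglongrightarrow> z" "\<And>k. norm (f (w k)) \<le> M * norm z * (1/2)^k"
proof -
  define ep where "ep k = norm z * (1/2)^(Suc k)" for k
  have ep0: "ep k > 0" for k using z by (simp add: ep_def)
  define W where "W z e = (SOME w. norm (f w) \<le> M * norm z \<and> norm (z - w) < e)" for z e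
  have W: "norm (f (W z e)) \<le> M * norm z \<and> norm (z - W z e) < e" if "0 < e" for z e
    unfolding W_def by (rule someI_ex) (rule approx[OF that])
  \<comment> \<open>\<open>u k\<close> is the remainder after \<open>k\<close> approximation steps\<close>
  define u where "u = rec_nat z (\<lambda>k uk. uk - W uk (ep k))"
  define w where "w k = W (u k) (ep k)" for k
  have u0: "u 0 = z" and uS: "u (Suc k) = u k - w k" for k by (simp_all add: u_def w_def)
  have u: "norm (u k) \<le> norm z * (1/2)^k" for k
  proof (cases k)
    case (Suc j)
    then show ?thesis using W[OF ep0[of j], of "u j"] by (simp add: uS w_def ep_def)
  qed (simp add: u0)
  have "(\<lambda>k. norm z * (1/2::real)^k) \<longlonglongrightarrow> 0"
    by (intro tendsto_mult_right_zero LIMSEQ_power_zero) simp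
  then have "u \<longlonglongrightarrow> 0"
    by (rule Lim_null_comparison[rotated]) (use u in \<open>intro always_eventually, blast\<close>)
  moreover have "(\<Sum>i<k. w i) = z - u k" for k
    by (induction k) (simp_all add: u0 uS algebra_simps)
  ultimately have "(\<lambda>k. \<Sum>i<k. w i) \<longlonglongrightarrow> z"
    using tendsto_diff[OF tendsto_const[of z]] by fastforce
  moreover have "norm (f (w k)) \<le> M * norm z * (1/2)^k" for k
    using W[OF ep0[of k], of "u k"] mult_left_mono[OF u[of k] M] by (simp add: w_def mult.assoc)
  ultimately show thesis by (rule that)
qed

lemma approximately_bounded_imp_bounded:
  fixes f :: "'a::banach \<Rightarrow> 'b::banach"
  assumes add: "\<And>x y. f (x + y) = f x + f y"
    and closed: "\<And>X x y. X \<longlonglongrightarrow> x \<Longrightarrow> (\<lambda>n. f (X n)) \<longlonglongrightarrow> y \<Longrightarrow> f x = y"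
    and M: "0 \<le> M" and approx: "\<And>z e. 0 < e \<Longrightarrow> \<exists>w. norm (f w) \<le> M * norm z \<and> norm (z - w) < e"
  shows "norm (f z) \<le> (2 * M) * norm z"
proof (cases "z = 0")
  case True then show ?thesis using add[of 0 0] by simp
next
  case False
  then obtain w where lim: "(\<lambda>k. \<Sum>i<k. w i) \<longlonglongrightarrow> z"
    and fw: "\<And>k. norm (f (w k)) \<le> M * norm z * (1/2)^k"
    using approximating_series[OF M _ approx] by blast
  have f_sum: "f (\<Sum>i<k. w i) = (\<Sum>i<k. f (w i))" for k
    using add[of 0 0] by (induction k) (simp_all add: add)
  have summable: "summable (\<lambda>i. f (w i))"
    by (rule summable_comparison_test[of _ "\<lambda>k. M * norm z * (1/2)^k"])
      (use fw in \<open>auto intro!: summable_mult summable_geometric\<close>)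
  then have "(\<lambda>k. f (\<Sum>i<k. w i)) \<longlonglongrightarrow> (\<Sum>i. f (w i))"
    unfolding f_sum by (rule summable_LIMSEQ)
  with lim have fz: "f z = (\<Sum>i. f (w i))" by (rule closed)
  have "norm (\<Sum>i<k. f (w i)) \<le> 2 * M * norm z" for k
  proof -
    have "norm (\<Sum>i<k. f (w i)) \<le> M * norm z * (\<Sum>i<k. (1/2::real)^i)"
      using order_trans[OF norm_sum sum_mono[OF fw]] by (simp add: sum_distrib_left)
    also have "\<dots> \<le> M * norm z * 2"
      using M by (intro mult_left_mono) (auto simp: sum_gp_strict)
    finally show ?thesis by simp
  qed
  then have "norm (\<Sum>i. f (w i)) \<le> 2 * M * norm z"
    by (intro LIMSEQ_le_const2[OF tendsto_norm[OF summable_LIMSEQ[OF summable]]]) blast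
  then show ?thesis using fz by simp
qed

theorem closed_graph_theorem:
  fixes f :: "'a::banach \<Rightarrow> 'b::banach"
  assumes add: "\<And>x y. f (x + y) = f x + f y" and scale: "\<And>r x. f (r *\<^sub>R x) = r *\<^sub>R f x"
    and closed: "\<And>X x y. X \<longlonglongrightarrow> x \<Longrightarrow> (\<lambda>n. f (X n)) \<longlonglongrightarrow> y \<Longrightarrow> f x = y"
  shows "\<exists>K. \<forall>x. norm (f x) \<le> K * norm x"
proof -
  have "f (x - y) = f x - f y" for x y
    using add[of "x - y" y] by (simp add: algebra_simps)
  then obtain M where M: "0 \<le> M" "\<forall>z e. 0 < e \<longrightarrow> (\<exists>w. norm (f w) \<le> M * norm z \<and> norm (z - w) < e)"
    using linear_approximately_bounded scale by blast
  have "norm (f x) \<le> (2 * M) * norm x" for x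
  proof (rule approximately_bounded_imp_bounded[of f M x])
    show "f (x + y) = f x + f y" for x y by (rule add)
    show "f x = y" if "X \<longlonglongrightarrow> x" "(\<lambda>n. f (X n)) \<longlonglongrightarrow> y" for X x y
      using that by (rule closed)
    show "0 \<le> M" by (rule M(1))
    show "\<exists>w. norm (f w) \<le> M * norm z \<and> norm (z - w) < e" if "0 < e" for z e
      using M(2) that by blast
  qed
  then show ?thesis by blast
qed

section \<open>Linear relations\<close>

lemma is_lopI:
  assumes "(0, 0) \<in> G"
    and "\<And>x y a b. (x, y) \<in> G \<Longrightarrow> (a, b) \<in> G \<Longrightarrow> (x + a, y + b) \<in> G"
    and "\<And>c x y. (x, y) \<in> G \<Longrightarrow> (scaleC c x, scaleC c y) \<in> G"
    and "\<And>y. (0, y) \<in> G \<Longrightarrow> y = 0"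
  shows "is_lop G"
  using assms unfolding is_lop_def by blast

lemma lop_zero: "is_lop G \<Longrightarrow> (0, 0) \<in> G"
  by (simp add: is_lop_def)

lemma lop_add: "is_lop G \<Longrightarrow> (x, y) \<in> G \<Longrightarrow> (a, b) \<in> G \<Longrightarrow> (x + a, y + b) \<in> G"
  by (simp add: is_lop_def)

lemma lop_scaleC: "is_lop G \<Longrightarrow> (x, y) \<in> G \<Longrightarrow> (scaleC c x, scaleC c y) \<in> G"
  by (simp add: is_lop_def)

lemma lop_zero_unique: "is_lop G \<Longrightarrow> (0, y) \<in> G \<Longrightarrow> y = 0"
  by (simp add: is_lop_def)

lemma lop_diff: "is_lop G \<Longrightarrow> (x, y) \<in> G \<Longrightarrow> (a, b) \<in> G \<Longrightarrow> (x - a, y - b) \<in> G"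
  using lop_add[of G x y "scaleC (-1) a" "scaleC (-1) b"] lop_scaleC[of G a b "-1"]
  by (simp add: scaleC_minus_one)

lemma lop_single_valued: "is_lop G \<Longrightarrow> (x, y) \<in> G \<Longrightarrow> (x, y') \<in> G \<Longrightarrow> y = y'"
  using lop_diff[of G x y x y'] lop_zero_unique[of G "y - y'"] by simp

lemma lop_scaleR: "is_lop G \<Longrightarrow> (x, y) \<in> G \<Longrightarrow> (r *\<^sub>R x, r *\<^sub>R y) \<in> G"
  by (simp add: scaleR_scaleC lop_scaleC)

lemma is_lop_relcomp:
  assumes A: "is_lop A" and B: "is_lop B"
  shows "is_lop (A O B)"
proof (rule is_lopI)
  show "(0, 0) \<in> A O B" using lop_zero[OF A] lop_zero[OF B] by blast
  show "(x + a, z + z') \<in> A O B" if "(x, z) \<in> A O B" "(a, z') \<in> A O B" for x z a z'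
    using that lop_add[OF A] lop_add[OF B] by blast
  show "(scaleC c x, scaleC c z) \<in> A O B" if "(x, z) \<in> A O B" for c x z
    using that lop_scaleC[OF A] lop_scaleC[OF B] by blast
  show "z = 0" if "(0, z) \<in> A O B" for z
    using that lop_zero_unique[OF A] lop_zero_unique[OF B] by blast
qed

lemma is_lop_lcomp: "is_lop A \<Longrightarrow> is_lop B \<Longrightarrow> is_lop (lcomp A B)"
  unfolding lcomp_def by (rule is_lop_relcomp)

lemma lcomp_iff: "(x, z) \<in> lcomp A B \<longleftrightarrow> (\<exists>y. (x, y) \<in> B \<and> (y, z) \<in> A)"
  unfolding lcomp_def by blast

lemma lsum_iff: "(x, w) \<in> lsum P Q \<longleftrightarrow> (\<exists>y z. (x, y) \<in> P \<and> (x, z) \<in> Q \<and> w = y + z)"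
  unfolding lsum_def by blast

lemma lcomp_Id_left [simp]: "lcomp Id B = B"
  by (simp add: lcomp_def)

lemma lcomp_Id_right [simp]: "lcomp A Id = A"
  by (simp add: lcomp_def)

lemma is_lop_Id: "is_lop (Id :: ('a::chilbert \<times> 'a) set)"
  by (rule is_lopI) auto

lemma is_lop_graph:
  fixes F :: "'a::chilbert \<Rightarrow> 'b::chilbert"
  assumes add: "\<And>x y. F (x + y) = F x + F y" and scale: "\<And>c x. F (scaleC c x) = scaleC c (F x)"
  shows "is_lop {(x, F x) | x. True}"
  using add[of 0 0] by (intro is_lopI) (auto simp: add scale)

lemma ldom_iff: "x \<in> ldom G \<longleftrightarrow> (\<exists>y. (x, y) \<in> G)"
  unfolding ldom_def by force

lemma ldom_eq_UNIV_iff: "ldom G = UNIV \<longleftrightarrow> (\<forall>x. \<exists>y. (x, y) \<in> G)"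
  by (auto simp: ldom_iff)

lemma lran_iff: "y \<in> lran G \<longleftrightarrow> (\<exists>x. (x, y) \<in> G)"
  unfolding lran_def by force

lemma lran_eq_UNIV_iff: "lran G = UNIV \<longleftrightarrow> (\<forall>y. \<exists>x. (x, y) \<in> G)"
  by (auto simp: lran_iff)

lemma ldom_add: "is_lop G \<Longrightarrow> x \<in> ldom G \<Longrightarrow> y \<in> ldom G \<Longrightarrow> x + y \<in> ldom G"
  unfolding ldom_iff using lop_add by blast

lemma lshift_iff: "(a, b) \<in> lshift A l \<longleftrightarrow> (\<exists>y. (a, y) \<in> A \<and> b = y - scaleC l a)"
  unfolding lshift_def by blast

lemma lshift_one_iff: "(a, b) \<in> lshift A 1 \<longleftrightarrow> (a, b + a) \<in> A"
  unfolding lshift_iff by (auto simp: scaleC_one)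

lemma lshift_diff:
  assumes A: "is_lop A" and "(x, h) \<in> lshift A l" "(x', h') \<in> lshift A l"
  shows "(x - x', h - h') \<in> lshift A l"
proof -
  obtain y y' where "(x, y) \<in> A" "h = y - scaleC l x" "(x', y') \<in> A" "h' = y' - scaleC l x'"
    using assms(2,3) unfolding lshift_iff by blast
  moreover have "(y - scaleC l x) - (y' - scaleC l x') = (y - y') - scaleC l (x - x')"
    by (simp add: scaleC_diff_right algebra_simps)
  ultimately show ?thesis using lop_diff[OF A] unfolding lshift_iff by metis
qed

lemma lid_minus_converse_iff: "(\<psi>, \<xi>) \<in> converse (lid_minus C) \<longleftrightarrow> (\<exists>y. (\<xi>, y) \<in> C \<and> \<psi> = \<xi> - y)"
  unfolding lid_minus_def by blast

definition bounded_rel :: "('a::real_normed_vector \<times> 'b::real_normed_vector) set \<Rightarrow> bool" where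
  "bounded_rel R \<longleftrightarrow> (\<exists>K. \<forall>x y. (x, y) \<in> R \<longrightarrow> norm y \<le> K * norm x)"

lemma bounded_relI: "(\<And>x y. (x, y) \<in> R \<Longrightarrow> norm y \<le> K * norm x) \<Longrightarrow> bounded_rel R"
  unfolding bounded_rel_def by blast

lemma bounded_relE:
  assumes "bounded_rel R"
  obtains K where "0 \<le> K" "\<And>x y. (x, y) \<in> R \<Longrightarrow> norm y \<le> K * norm x"
proof -
  obtain K where K: "\<And>x y. (x, y) \<in> R \<Longrightarrow> norm y \<le> K * norm x"
    using assms unfolding bounded_rel_def by blast
  have "norm y \<le> max K 0 * norm x" if "(x, y) \<in> R" for x y
    using K[OF that] mult_right_mono[of K "max K 0" "norm x"] by simp
  then show thesis using that[of "max K 0"] by simp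
qed

lemma bounded_rel_relcomp:
  assumes "bounded_rel P" "bounded_rel Q"
  shows "bounded_rel (P O Q)"
proof -
  obtain K1 where "0 \<le> K1" and K1: "\<And>x y. (x, y) \<in> P \<Longrightarrow> norm y \<le> K1 * norm x"
    using bounded_relE[OF assms(1)] by blast
  obtain K2 where "0 \<le> K2" and K2: "\<And>x y. (x, y) \<in> Q \<Longrightarrow> norm y \<le> K2 * norm x"
    using bounded_relE[OF assms(2)] by blast
  have "norm z \<le> (K2 * K1) * norm x" if xz: "(x, z) \<in> P O Q" for x z
  proof -
    obtain y where y: "(x, y) \<in> P" "(y, z) \<in> Q" using xz by blast
    have "norm z \<le> K2 * norm y" by (rule K2[OF y(2)])
    also have "\<dots> \<le> K2 * (K1 * norm x)" by (rule mult_left_mono[OF K1[OF y(1)] \<open>0 \<le> K2\<close>])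
    finally show ?thesis by (simp add: mult.assoc)
  qed
  then show ?thesis by (rule bounded_relI)
qed

lemma resolvent_set_iff:
  "l \<in> resolvent_set A \<longleftrightarrow> lran (lshift A l) = UNIV \<and> (\<forall>x. (x, 0) \<in> lshift A l \<longrightarrow> x = 0)
      \<and> bounded_rel (converse (lshift A l))"
proof -
  have "bounded_rel (converse (lshift A l))
        \<longleftrightarrow> (\<exists>K. \<forall>x y. (x, y) \<in> lshift A l \<longrightarrow> norm x \<le> K * norm y)"
    unfolding bounded_rel_def converse_iff by (rule ex_cong1) (rule all_comm)
  then show ?thesis unfolding resolvent_set_def by simp
qed

lemma closed_relI:
  fixes G :: "('a::metric_space \<times> 'b::metric_space) set"
  assumes "\<And>X Y x y. (\<And>n. (X n, Y n) \<in> G) \<Longrightarrow> X \<longlonglongrightarrow> x \<Longrightarrow> Y \<longlonglongrightarrow> y \<Longrightarrow> (x, y) \<in> G"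
  shows "closed G"
  unfolding closed_sequential_limits
proof (intro allI impI, elim conjE)
  fix S l assume S: "\<forall>n. S n \<in> G" and lim: "S \<longlonglongrightarrow> l"
  have "(fst l, snd l) \<in> G"
  proof (rule assms)
    show "(fst (S n), snd (S n)) \<in> G" for n using S by simp
    show "(\<lambda>n. fst (S n)) \<longlonglongrightarrow> fst l" using lim by (rule tendsto_fst)
    show "(\<lambda>n. snd (S n)) \<longlonglongrightarrow> snd l" using lim by (rule tendsto_snd)
  qed
  then show "l \<in> G" by simp
qed

lemma closure_relI:
  fixes G :: "('a::metric_space \<times> 'b::metric_space) set"
  assumes "\<And>n. (X n, Y n) \<in> G" "X \<longlonglongrightarrow> x" "Y \<longlonglongrightarrow> y"
  shows "(x, y) \<in> closure G"
  unfolding closure_sequential using assms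
  by (intro exI[of _ "\<lambda>n. (X n, Y n)"]) (simp add: tendsto_Pair)

lemma closed_relD:
  fixes G :: "('a::metric_space \<times> 'b::metric_space) set"
  assumes "closed G" "\<And>n. (X n, Y n) \<in> G" "X \<longlonglongrightarrow> x" "Y \<longlonglongrightarrow> y"
  shows "(x, y) \<in> G"
  using closure_relI[OF assms(2-4)] closure_closed[OF assms(1)] by simp

lemma closed_Id: "closed (Id :: ('a::metric_space \<times> 'a) set)"
proof (rule closed_relI)
  fix X Y :: "nat \<Rightarrow> 'a" and x y
  assume XY: "\<And>n. (X n, Y n) \<in> Id" and lim: "X \<longlonglongrightarrow> x" "Y \<longlonglongrightarrow> y"
  have "X = Y" by (rule ext) (use XY in auto)
  then show "(x, y) \<in> Id" using lim LIMSEQ_unique by auto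
qed

lemma closed_graphI:
  fixes F :: "'a::metric_space \<Rightarrow> 'b::metric_space"
  assumes "\<And>X x y. X \<longlonglongrightarrow> x \<Longrightarrow> (\<lambda>n. F (X n)) \<longlonglongrightarrow> y \<Longrightarrow> F x = y"
  shows "closed {(x, F x) | x. True}"
proof (rule closed_relI)
  fix X Y x y assume XY: "\<And>n. (X n, Y n) \<in> {(x, F x) | x. True}" and lim: "X \<longlonglongrightarrow> x" "Y \<longlonglongrightarrow> y"
  have "Y = (\<lambda>n. F (X n))" by (rule ext) (use XY in blast)
  then have "F x = y" using assms lim by blast
  then show "(x, y) \<in> {(x, F x) | x. True}" by blast
qed

lemma closable_if_closed: "is_lop G \<Longrightarrow> closed G \<Longrightarrow> closable G"
  by (simp add: closable_def closure_closed)

lemma adjointable_graph_closed: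
  fixes F :: "'a::chilbert \<Rightarrow> 'b::chilbert"
  assumes adj: "\<And>v. \<exists>w. \<forall>x. cinner (F x) v = cinner x w"
    and lim: "X \<longlonglongrightarrow> x" "(\<lambda>n. F (X n)) \<longlonglongrightarrow> y"
  shows "F x = y"
proof -
  have "cinner (F x - y) v = 0" for v
  proof -
    obtain w where w: "\<And>x. cinner (F x) v = cinner x w" using adj by blast
    have "(\<lambda>n. cinner (F (X n)) v) \<longlonglongrightarrow> cinner y v" by (intro tendsto_cinner lim tendsto_const)
    moreover have "(\<lambda>n. cinner (F (X n)) v) \<longlonglongrightarrow> cinner x w"
      unfolding w by (intro tendsto_cinner lim tendsto_const)
    ultimately have "cinner y v = cinner x w" using LIMSEQ_unique by blast
    then show ?thesis by (simp add: cinner_diff_left w)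
  qed
  then show "F x = y" using cinner_ext_right[of "F x - y"] by simp
qed

lemma adjointable_bounded:
  fixes F :: "'a::chilbert \<Rightarrow> 'b::chilbert"
  assumes add: "\<And>x y. F (x + y) = F x + F y" and scale: "\<And>c x. F (scaleC c x) = scaleC c (F x)"
    and adj: "\<And>v. \<exists>w. \<forall>x. cinner (F x) v = cinner x w"
  shows "\<exists>K. \<forall>x. norm (F x) \<le> K * norm x"
proof (rule closed_graph_theorem)
  show "F (x + y) = F x + F y" for x y by (rule add)
  show "F (r *\<^sub>R x) = r *\<^sub>R F x" for r x by (simp only: scaleR_scaleC scale)
  show "F x = y" if "X \<longlonglongrightarrow> x" "(\<lambda>n. F (X n)) \<longlonglongrightarrow> y" for X x y
    using adj that by (rule adjointable_graph_closed)
qed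

lemma closed_total_lop_bounded:
  fixes R :: "('a::chilbert \<times> 'b::chilbert) set"
  assumes lop: "is_lop R" and closed: "closed R" and total: "ldom R = UNIV"
  shows "bounded_rel R"
proof -
  define F where "F x = (THE y. (x, y) \<in> R)" for x
  have FR: "(x, F x) \<in> R" for x
  proof -
    have "x \<in> ldom R" using total by simp
    then obtain y where y: "(x, y) \<in> R" unfolding ldom_iff by blast
    then show ?thesis unfolding F_def by (rule theI) (use lop_single_valued[OF lop] y in blast)
  qed
  have F_eq: "(x, y) \<in> R \<Longrightarrow> F x = y" for x y
    using lop_single_valued[OF lop FR] by blast
  have "\<exists>K. \<forall>x. norm (F x) \<le> K * norm x"
  proof (rule closed_graph_theorem)
    show "F (x + y) = F x + F y" for x y by (rule F_eq, rule lop_add[OF lop FR FR])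
    show "F (r *\<^sub>R x) = r *\<^sub>R F x" for r x by (rule F_eq, rule lop_scaleR[OF lop FR])
    show "F x = y" if "X \<longlonglongrightarrow> x" "(\<lambda>n. F (X n)) \<longlonglongrightarrow> y" for X x y
      by (rule F_eq, rule closed_relD[OF closed FR that])
  qed
  then show ?thesis using F_eq unfolding bounded_rel_def by metis
qed

lemma bounded_relcomp_closable_closed:
  assumes P: "is_lop P" "bounded_rel P" and Q: "closable Q" and total: "ldom (P O Q) = UNIV"
  shows "closed (P O Q)"
proof (rule closed_relI)
  fix X Z x z assume XZ: "\<And>n. (X n, Z n) \<in> P O Q" and lim: "X \<longlonglongrightarrow> x" "Z \<longlonglongrightarrow> z"
  obtain K where K: "\<And>x y. (x, y) \<in> P \<Longrightarrow> norm y \<le> K * norm x"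
    using P(2) unfolding bounded_rel_def by blast
  have "\<forall>n. \<exists>y. (X n, y) \<in> P \<and> (y, Z n) \<in> Q" using XZ by blast
  then obtain Y where "\<forall>n. (X n, Y n) \<in> P \<and> (Y n, Z n) \<in> Q" by (rule choice[THEN exE])
  then have Y: "\<And>n. (X n, Y n) \<in> P" "\<And>n. (Y n, Z n) \<in> Q" by simp_all
  have "x \<in> ldom (P O Q)" using total by simp
  then obtain y z' where y: "(x, y) \<in> P" "(y, z') \<in> Q"
    unfolding ldom_iff by blast
  have bound: "norm (Y n - y) \<le> K * norm (X n - x)" for n
    by (rule K[OF lop_diff[OF P(1) Y(1) y(1)]])
  have "(\<lambda>n. K * norm (X n - x)) \<longlonglongrightarrow> K * norm (x - x)"
    by (intro tendsto_intros lim)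
  then have "(\<lambda>n. K * norm (X n - x)) \<longlonglongrightarrow> 0" by simp
  then have "(\<lambda>n. Y n - y) \<longlonglongrightarrow> 0"
    by (rule Lim_null_comparison[rotated]) (use bound in \<open>intro always_eventually, blast\<close>)
  then have "Y \<longlonglongrightarrow> y" by (simp add: LIM_zero_iff)
  then have yz: "(y, z) \<in> closure Q" by (rule closure_relI[OF Y(2) _ lim(2)])
  have yz': "(y, z') \<in> closure Q" using y(2) closure_subset by blast
  have "is_lop (closure Q)" using Q by (simp add: closable_def)
  then have "z = z'" using yz yz' by (rule lop_single_valued)
  then show "(x, z) \<in> P O Q" using y by blast
qed

lemma bounded_rel_relcomp_closable:
  fixes P :: "('a::chilbert \<times> 'b::chilbert) set" and Q :: "('b \<times> 'c::chilbert) set"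
  assumes P: "is_lop P" "bounded_rel P" and Q: "closable Q" and total: "ldom (P O Q) = UNIV"
  shows "bounded_rel (P O Q)"
  using Q by (intro closed_total_lop_bounded is_lop_relcomp P(1) total
      bounded_relcomp_closable_closed[OF P Q total]) (simp add: closable_def)

lemma resolvent_set_imp_closed:
  assumes lop: "is_lop A" and res: "l \<in> resolvent_set A"
  shows "closed A"
proof (rule closed_relI)
  fix X Y x y assume XY: "\<And>n. (X n, Y n) \<in> A" and lim: "X \<longlonglongrightarrow> x" "Y \<longlonglongrightarrow> y"
  have "\<exists>K. \<forall>a b. (a, b) \<in> lshift A l \<longrightarrow> norm a \<le> K * norm b"
    using res by (simp add: resolvent_set_def)
  then obtain K where K: "\<And>a b. (a, b) \<in> lshift A l \<Longrightarrow> norm a \<le> K * norm b" by blast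
  have "y - scaleC l x \<in> lran (lshift A l)" using res by (simp add: resolvent_set_def)
  then obtain a where a: "(a, y - scaleC l x) \<in> lshift A l" unfolding lran_iff by blast
  define d where "d n = (Y n - scaleC l (X n)) - (y - scaleC l x)" for n
  have "(X n, Y n - scaleC l (X n)) \<in> lshift A l" for n using XY unfolding lshift_iff by blast
  then have "(X n - a, d n) \<in> lshift A l" for n unfolding d_def by (rule lshift_diff[OF lop _ a])
  then have bound: "norm (X n - a) \<le> K * norm (d n)" for n by (rule K)
  have "(\<lambda>n. K * norm (d n)) \<longlonglongrightarrow> K * norm ((y - scaleC l x) - (y - scaleC l x))"
    unfolding d_def by (intro tendsto_intros tendsto_scaleC lim)
  then have "(\<lambda>n. K * norm (d n)) \<longlonglongrightarrow> 0" by simp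
  then have "(\<lambda>n. X n - a) \<longlonglongrightarrow> 0"
    by (rule Lim_null_comparison[rotated]) (use bound in \<open>intro always_eventually, blast\<close>)
  then have "X \<longlonglongrightarrow> a" by (simp add: LIM_zero_iff)
  with lim(1) have "x = a" by (rule LIMSEQ_unique)
  moreover obtain y' where "(a, y') \<in> A" "y - scaleC l x = y' - scaleC l a"
    using a unfolding lshift_iff by blast
  ultimately show "(x, y) \<in> A" by simp
qed

lemma is_lop_inverse_lid_minus:
  assumes C: "is_lop C" and res: "1 \<in> resolvent_set C"
  shows "is_lop (converse (lid_minus C))"
proof (rule is_lopI)
  show "(0, 0) \<in> converse (lid_minus C)"
    unfolding lid_minus_converse_iff using lop_zero[OF C] by force
  show "(x + x', y + y') \<in> converse (lid_minus C)"
    if xy: "(x, y) \<in> converse (lid_minus C)" "(x', y') \<in> converse (lid_minus C)" for x y x' y'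
  proof -
    obtain z z' where "(y, z) \<in> C" "x = y - z" "(y', z') \<in> C" "x' = y' - z'"
      using xy unfolding lid_minus_converse_iff by blast
    moreover have "(y - z) + (y' - z') = (y + y') - (z + z')" by simp
    ultimately show ?thesis unfolding lid_minus_converse_iff using lop_add[OF C] by blast
  qed
  show "(scaleC c x, scaleC c y) \<in> converse (lid_minus C)" if xy: "(x, y) \<in> converse (lid_minus C)" for c x y
  proof -
    obtain z where "(y, z) \<in> C" "x = y - z" using xy unfolding lid_minus_converse_iff by blast
    then show ?thesis unfolding lid_minus_converse_iff using lop_scaleC[OF C] scaleC_diff_right by blast
  qed
  show "y = 0" if "(0, y) \<in> converse (lid_minus C)" for y
  proof -
    have "(y, 0) \<in> lshift C 1"
      using that unfolding lid_minus_converse_iff lshift_one_iff by auto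
    then show ?thesis using res unfolding resolvent_set_iff by blast
  qed
qed

lemma ldom_inverse_lid_minus:
  assumes "1 \<in> resolvent_set C"
  shows "ldom (converse (lid_minus C)) = UNIV"
proof -
  have "- \<psi> \<in> lran (lshift C 1)" for \<psi> using assms by (simp add: resolvent_set_def)
  then have "\<exists>\<xi>. (\<psi>, \<xi>) \<in> converse (lid_minus C)" for \<psi>
    unfolding lran_iff lshift_one_iff lid_minus_converse_iff by (metis add.commute diff_add_cancel
        minus_add_cancel uminus_add_conv_diff)
  then show ?thesis by (auto simp: ldom_iff)
qed

lemma bounded_rel_inverse_lid_minus:
  assumes "1 \<in> resolvent_set C"
  shows "bounded_rel (converse (lid_minus C))"
proof -
  have "\<exists>K. \<forall>x y. (x, y) \<in> lshift C 1 \<longrightarrow> norm x \<le> K * norm y"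
    using assms by (simp add: resolvent_set_def)
  then obtain K where K: "\<And>x y. (x, y) \<in> lshift C 1 \<Longrightarrow> norm x \<le> K * norm y" by blast
  have "norm \<xi> \<le> K * norm \<psi>" if \<psi>\<xi>: "(\<psi>, \<xi>) \<in> converse (lid_minus C)" for \<psi> \<xi>
  proof -
    obtain y where "(\<xi>, y) \<in> C" "\<psi> = \<xi> - y" using \<psi>\<xi> unfolding lid_minus_converse_iff by blast
    then have "(\<xi>, - \<psi>) \<in> lshift C 1" unfolding lshift_one_iff by simp
    then show ?thesis using K by fastforce
  qed
  then show ?thesis by (rule bounded_relI)
qed

section \<open>The decomposition induced by a surjective boundary map\<close>

locale boundary_map =
  fixes T :: "('h::chilbert \<times> 'h) set" and G0 :: "'h \<Rightarrow> 'g::chilbert"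
  assumes T_lop: "is_lop T" and G0_linear: "clinear_on (ldom T) G0" and G0_surj: "G0 ` ldom T = UNIV"
begin

lemma in_ldomI: "(f, y) \<in> T \<Longrightarrow> f \<in> ldom T"
  by (auto simp: ldom_iff)

lemma G0_add: "(f, a) \<in> T \<Longrightarrow> (f', b) \<in> T \<Longrightarrow> G0 (f + f') = G0 f + G0 f'"
  using G0_linear in_ldomI unfolding clinear_on_def by blast

lemma G0_scaleC: "(f, a) \<in> T \<Longrightarrow> G0 (scaleC c f) = scaleC c (G0 f)"
  using G0_linear in_ldomI unfolding clinear_on_def by blast

lemma G0_zero: "G0 0 = 0"
  using G0_add[OF lop_zero[OF T_lop] lop_zero[OF T_lop]] by simp

lemma G0_diff: "(f, a) \<in> T \<Longrightarrow> (f', b) \<in> T \<Longrightarrow> G0 (f - f') = G0 f - G0 f'"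
  using G0_add[OF lop_diff[OF T_lop], of f a f' b f' b] by (simp add: eq_diff_eq)

text \<open>\<open>A0 - l\<close> is a bijection of \<open>ker \<Gamma>0\<close> onto the space: the resolvent set without the
  requirement that the inverse be bounded.\<close>
definition regular_point :: "complex \<Rightarrow> bool" where
  "regular_point l \<longleftrightarrow> (\<forall>h. \<exists>f. (f, h + scaleC l f) \<in> T \<and> G0 f = 0)
     \<and> (\<forall>f. (f, scaleC l f) \<in> T \<and> G0 f = 0 \<longrightarrow> f = 0)"

lemma regular_point_if_resolvent:
  assumes "l \<in> resolvent_set (ker_restr T G0)"
  shows "regular_point l"
  unfolding regular_point_def
proof (intro conjI allI impI)
  fix h
  have "h \<in> lran (lshift (ker_restr T G0) l)" using assms by (simp add: resolvent_set_def)
  then show "\<exists>f. (f, h + scaleC l f) \<in> T \<and> G0 f = 0"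
    unfolding lran_iff lshift_iff ker_restr_def by force
next
  fix f assume "(f, scaleC l f) \<in> T \<and> G0 f = 0"
  then have "(f, 0) \<in> lshift (ker_restr T G0) l" unfolding lshift_iff ker_restr_def by force
  then show "f = 0" using assms by (simp add: resolvent_set_def)
qed

lemma regular_point_eigen_zero: "regular_point l \<Longrightarrow> (f, scaleC l f) \<in> T \<Longrightarrow> G0 f = 0 \<Longrightarrow> f = 0"
  unfolding regular_point_def by blast

lemma diff_solutions_eigen:
  assumes "(f, h + scaleC l f) \<in> T" "(f', h + scaleC l f') \<in> T"
  shows "(f - f', scaleC l (f - f')) \<in> T"
  using lop_diff[OF T_lop assms] by (simp add: scaleC_diff_right)

definition resolvent0 :: "complex \<Rightarrow> 'h \<Rightarrow> 'h" where
  "resolvent0 l h = (THE f. (f, h + scaleC l f) \<in> T \<and> G0 f = 0)"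

lemma resolvent0_unique:
  assumes l: "regular_point l" and "(f, h + scaleC l f) \<in> T" "G0 f = 0"
    and "(f', h + scaleC l f') \<in> T" "G0 f' = 0"
  shows "f = f'"
  using regular_point_eigen_zero[OF l diff_solutions_eigen[OF assms(2,4)]] G0_diff[OF assms(2,4)] assms(3,5)
  by simp

lemma resolvent0:
  assumes l: "regular_point l"
  shows "(resolvent0 l h, h + scaleC l (resolvent0 l h)) \<in> T" "G0 (resolvent0 l h) = 0"
proof -
  have ex: "\<exists>f. (f, h + scaleC l f) \<in> T \<and> G0 f = 0" using l unfolding regular_point_def by blast
  have "(resolvent0 l h, h + scaleC l (resolvent0 l h)) \<in> T \<and> G0 (resolvent0 l h) = 0"
    unfolding resolvent0_def by (rule theI') (use ex resolvent0_unique[OF l] in blast)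
  then show "(resolvent0 l h, h + scaleC l (resolvent0 l h)) \<in> T" "G0 (resolvent0 l h) = 0" by auto
qed

lemma resolvent0_eq:
  assumes l: "regular_point l" and "(f, h + scaleC l f) \<in> T" "G0 f = 0"
  shows "resolvent0 l h = f"
  using resolvent0_unique[OF l resolvent0[OF l] assms(2,3)] .

lemma resolvent0_ldom: "regular_point l \<Longrightarrow> resolvent0 l h \<in> ldom T"
  using resolvent0(1) in_ldomI by blast

lemma resolvent0_add:
  assumes l: "regular_point l"
  shows "resolvent0 l (h + h') = resolvent0 l h + resolvent0 l h'"
proof (rule resolvent0_eq[OF l])
  show "(resolvent0 l h + resolvent0 l h', h + h' + scaleC l (resolvent0 l h + resolvent0 l h')) \<in> T"
    using lop_add[OF T_lop resolvent0(1)[OF l, of h] resolvent0(1)[OF l, of h']]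
    by (simp add: scaleC_add_right algebra_simps)
  show "G0 (resolvent0 l h + resolvent0 l h') = 0"
    using G0_add[OF resolvent0(1)[OF l] resolvent0(1)[OF l]] resolvent0(2)[OF l] by simp
qed

lemma resolvent0_scaleC:
  assumes l: "regular_point l"
  shows "resolvent0 l (scaleC c h) = scaleC c (resolvent0 l h)"
proof (rule resolvent0_eq[OF l])
  show "(scaleC c (resolvent0 l h), scaleC c h + scaleC l (scaleC c (resolvent0 l h))) \<in> T"
    using lop_scaleC[OF T_lop resolvent0(1)[OF l, of h], of c]
    by (simp add: scaleC_add_right scaleC_scaleC mult.commute)
  show "G0 (scaleC c (resolvent0 l h)) = 0"
    using G0_scaleC[OF resolvent0(1)[OF l]] resolvent0(2)[OF l] by simp
qed

lemma converse_lshift_A0: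
  assumes l: "regular_point l"
  shows "converse (lshift (ker_restr T G0) l) = {(h, resolvent0 l h) | h. True}"
proof -
  have "(f, h) \<in> lshift (ker_restr T G0) l \<longleftrightarrow> (f, h + scaleC l f) \<in> T \<and> G0 f = 0" for f h
    unfolding lshift_iff ker_restr_def by auto
  then have "(h, f) \<in> converse (lshift (ker_restr T G0) l) \<longleftrightarrow> f = resolvent0 l h" for f h
    using resolvent0[OF l] resolvent0_eq[OF l] by auto
  then show ?thesis by auto
qed

lemma resolvent0_bounded:
  assumes "l \<in> resolvent_set (ker_restr T G0)"
  shows "\<exists>K. \<forall>h. norm (resolvent0 l h) \<le> K * norm h"
proof -
  have "\<exists>K. \<forall>x y. (x, y) \<in> lshift (ker_restr T G0) l \<longrightarrow> norm x \<le> K * norm y"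
    using assms by (simp add: resolvent_set_def)
  moreover have "(resolvent0 l h, h) \<in> lshift (ker_restr T G0) l" for h
    using converse_lshift_A0[OF regular_point_if_resolvent[OF assms]] by blast
  ultimately show ?thesis by blast
qed

lemma resolvent0_adjoint:
  assumes res: "l \<in> resolvent_set (ker_restr T G0)"
  shows "\<exists>g. \<forall>z. cinner (resolvent0 l z) k = cinner z g"
proof -
  have l: "regular_point l" by (rule regular_point_if_resolvent[OF res])
  obtain K where K: "\<And>h. norm (resolvent0 l h) \<le> K * norm h"
    using resolvent0_bounded[OF res] by blast
  show ?thesis
  proof (rule riesz_representation)
    show "cinner (resolvent0 l (x + y)) k = cinner (resolvent0 l x) k + cinner (resolvent0 l y) k"
      for x y by (simp add: resolvent0_add[OF l] cinner_add_left)
    show "cinner (resolvent0 l (scaleC c x)) k = c * cinner (resolvent0 l x) k" for c x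
      by (simp add: resolvent0_scaleC[OF l] cinner_scaleC_left)
    show "cmod (cinner (resolvent0 l x) k) \<le> (K * norm k) * norm x" for x
      using norm_cinner_le[of "resolvent0 l x" k] mult_right_mono[OF K[of x] norm_ge_zero[of k]]
      by (simp add: mult_ac)
  qed
qed

definition gamma_fun :: "complex \<Rightarrow> 'g \<Rightarrow> 'h" where
  "gamma_fun l \<phi> = (THE f. (f, scaleC l f) \<in> T \<and> G0 f = \<phi>)"

lemma gamma_fun_unique:
  assumes l: "regular_point l" and "(f, scaleC l f) \<in> T" "(f', scaleC l f') \<in> T" "G0 f = G0 f'"
  shows "f = f'"
  using regular_point_eigen_zero[OF l diff_solutions_eigen[of f 0 l f']] G0_diff[OF assms(2,3)] assms by simp

text \<open>The decomposition \<open>dom T = ker \<Gamma>0 \<dotplus> ker (T - l)\<close>.\<close>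
lemma sub_resolvent0_eigen:
  assumes l: "regular_point l" and xy: "(x, y) \<in> T"
  defines "f \<equiv> x - resolvent0 l (y - scaleC l x)"
  shows "(f, scaleC l f) \<in> T" "G0 f = G0 x"
proof -
  let ?r = "resolvent0 l (y - scaleC l x)"
  have "(x - ?r, y - ((y - scaleC l x) + scaleC l ?r)) \<in> T"
    by (rule lop_diff[OF T_lop xy resolvent0(1)[OF l]])
  then show "(f, scaleC l f) \<in> T" by (simp add: f_def scaleC_diff_right)
  show "G0 f = G0 x"
    using G0_diff[OF xy resolvent0(1)[OF l]] resolvent0(2)[OF l] by (simp add: f_def)
qed

lemma gamma_fun:
  assumes l: "regular_point l"
  shows "(gamma_fun l \<phi>, scaleC l (gamma_fun l \<phi>)) \<in> T" "G0 (gamma_fun l \<phi>) = \<phi>"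
proof -
  have "\<phi> \<in> G0 ` ldom T" using G0_surj by simp
  then obtain x where "x \<in> ldom T" "G0 x = \<phi>" by blast
  then obtain y where "(x, y) \<in> T" "G0 x = \<phi>" unfolding ldom_iff by blast
  then have ex: "\<exists>f. (f, scaleC l f) \<in> T \<and> G0 f = \<phi>" using sub_resolvent0_eigen[OF l] by blast
  have "(gamma_fun l \<phi>, scaleC l (gamma_fun l \<phi>)) \<in> T \<and> G0 (gamma_fun l \<phi>) = \<phi>"
    unfolding gamma_fun_def by (rule theI') (use ex gamma_fun_unique[OF l] in blast)
  then show "(gamma_fun l \<phi>, scaleC l (gamma_fun l \<phi>)) \<in> T" "G0 (gamma_fun l \<phi>) = \<phi>" by auto
qed

lemma gamma_fun_eq:
  assumes l: "regular_point l" and f: "(f, scaleC l f) \<in> T"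
  shows "gamma_fun l (G0 f) = f"
  using gamma_fun_unique[OF l gamma_fun(1)[OF l] f] gamma_fun(2)[OF l] by simp

lemma gamma_fun_ldom: "regular_point l \<Longrightarrow> gamma_fun l \<phi> \<in> ldom T"
  using gamma_fun(1) in_ldomI by blast

lemma gamma_fun_add:
  assumes l: "regular_point l"
  shows "gamma_fun l (\<phi> + \<psi>) = gamma_fun l \<phi> + gamma_fun l \<psi>"
proof -
  have "(gamma_fun l \<phi> + gamma_fun l \<psi>, scaleC l (gamma_fun l \<phi> + gamma_fun l \<psi>)) \<in> T"
    using lop_add[OF T_lop gamma_fun(1)[OF l] gamma_fun(1)[OF l]] by (simp add: scaleC_add_right)
  from gamma_fun_eq[OF l this] show ?thesis
    using G0_add[OF gamma_fun(1)[OF l] gamma_fun(1)[OF l]] gamma_fun(2)[OF l] by simp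
qed

lemma gamma_fun_scaleC:
  assumes l: "regular_point l"
  shows "gamma_fun l (scaleC c \<phi>) = scaleC c (gamma_fun l \<phi>)"
proof -
  have "(scaleC c (gamma_fun l \<phi>), scaleC l (scaleC c (gamma_fun l \<phi>))) \<in> T"
    using lop_scaleC[OF T_lop gamma_fun(1)[OF l]] by (simp add: scaleC_scaleC mult.commute)
  from gamma_fun_eq[OF l this] show ?thesis
    using G0_scaleC[OF gamma_fun(1)[OF l]] gamma_fun(2)[OF l] by simp
qed

lemma gamma_field_eq:
  assumes l: "regular_point l"
  shows "gamma_field T G0 l = {(\<phi>, gamma_fun l \<phi>) | \<phi>. True}"
proof -
  have "(\<phi>, f) \<in> gamma_field T G0 l \<longleftrightarrow> f = gamma_fun l \<phi>" for \<phi> f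
    unfolding gamma_field_def using gamma_fun[OF l] gamma_fun_eq[OF l] by auto
  then show ?thesis by auto
qed

end

section \<open>Triples for an adjoint pair\<close>

locale boundary_triple = T: boundary_map T G0 + Tt: boundary_map Tt Gt0
  for T :: "('h::chilbert \<times> 'h) set" and G0 :: "'h \<Rightarrow> 'g::chilbert"
    and Tt :: "('h \<times> 'h) set" and Gt0 :: "'h \<Rightarrow> 'g" +
  fixes G1 Gt1 :: "'h \<Rightarrow> 'g"
  assumes G1_linear: "clinear_on (ldom T) G1"
    and green: "\<And>f Tf g Ttg. (f, Tf) \<in> T \<Longrightarrow> (g, Ttg) \<in> Tt \<Longrightarrow>
                  cinner Tf g - cinner f Ttg = cinner (G1 f) (Gt0 g) - cinner (G0 f) (Gt1 g)"
    and adjoint_A0: "ladj (ker_restr T G0) = ker_restr Tt Gt0"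
begin

lemma G1_add: "(f, a) \<in> T \<Longrightarrow> (f', b) \<in> T \<Longrightarrow> G1 (f + f') = G1 f + G1 f'"
  using G1_linear T.in_ldomI unfolding clinear_on_def by blast

lemma G1_scaleC: "(f, a) \<in> T \<Longrightarrow> G1 (scaleC c f) = scaleC c (G1 f)"
  using G1_linear T.in_ldomI unfolding clinear_on_def by blast

lemma G1_zero: "G1 0 = 0"
  using G1_add[OF lop_zero[OF T.T_lop] lop_zero[OF T.T_lop]] by simp

lemma G1_diff: "(f, a) \<in> T \<Longrightarrow> (f', b) \<in> T \<Longrightarrow> G1 (f - f') = G1 f - G1 f'"
  using G1_add[OF lop_diff[OF T.T_lop], of f a f' b f' b] by (simp add: eq_diff_eq)

text \<open>Riesz representation of the adjoint of the bounded \<open>(A0 - l)\<inverse>\<close> shows that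
  \<open>A0\<^sup>* - cnj l\<close> is onto, and \<open>A0\<^sup>*\<close> is the restriction of \<open>Tt\<close> to \<open>ker Gt0\<close> by (M); it is
  injective because \<open>A0 - l\<close> is onto.\<close>

lemma regular_point_cnj:
  assumes res: "l \<in> resolvent_set (ker_restr T G0)"
  shows "Tt.regular_point (cnj l)"
proof -
  have l: "T.regular_point l" by (rule T.regular_point_if_resolvent[OF res])
  have resolvent0_A0: "T.resolvent0 l (y - scaleC l f) = f" if "(f, y) \<in> ker_restr T G0" for f y
    using that by (intro T.resolvent0_eq[OF l]) (auto simp: ker_restr_def)
  have onto: "\<exists>g. (g, k + scaleC (cnj l) g) \<in> Tt \<and> Gt0 g = 0" for k
  proof -
    obtain g where g: "\<And>z. cinner (T.resolvent0 l z) k = cinner z g"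
      using T.resolvent0_adjoint[OF res] by blast
    have "(g, k + scaleC (cnj l) g) \<in> ladj (ker_restr T G0)"
      unfolding ladj_def
    proof (clarsimp)
      fix f y assume fy: "(f, y) \<in> ker_restr T G0"
      have "cinner f k = cinner (y - scaleC l f) g"
        using g[of "y - scaleC l f"] resolvent0_A0[OF fy] by simp
      then show "cinner y g = cinner f (k + scaleC (cnj l) g)"
        by (simp add: cinner_add_right cinner_scaleC_right cinner_diff_left cinner_scaleC_left)
    qed
    then show ?thesis unfolding adjoint_A0 by (auto simp: ker_restr_def)
  qed
  have "g = 0" if g: "(g, scaleC (cnj l) g) \<in> Tt" "Gt0 g = 0" for g
  proof (rule cinner_ext_left)
    fix z
    let ?r = "T.resolvent0 l z"
    have "(g, scaleC (cnj l) g) \<in> ladj (ker_restr T G0)" unfolding adjoint_A0 using g by (simp add: ker_restr_def)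
    moreover have "(?r, z + scaleC l ?r) \<in> ker_restr T G0"
      using T.resolvent0[OF l] by (simp add: ker_restr_def)
    ultimately have "cinner (z + scaleC l ?r) g = cinner ?r (scaleC (cnj l) g)"
      unfolding ladj_def by blast
    then show "cinner z g = 0" by (simp add: cinner_add_left cinner_scaleC_left cinner_scaleC_right)
  qed
  then show ?thesis unfolding Tt.regular_point_def using onto by blast
qed

text \<open>Green's identity at eigenvectors and resolvent values identifies three adjoints:
  \<open>Tt.gamma_fun (cnj l)\<close> has adjoint \<open>h \<mapsto> G1 (resolvent0 l h)\<close>, \<open>T.gamma_fun l\<close> has adjoint
  \<open>h \<mapsto> Gt1 (Tt.resolvent0 (cnj l) h)\<close>, and the Weyl function \<open>M(l)\<close> has adjoint
  \<open>\<psi> \<mapsto> Gt1 (Tt.gamma_fun (cnj l) \<psi>)\<close>.\<close>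

lemma cinner_gamma_tilde:
  assumes res: "l \<in> resolvent_set (ker_restr T G0)"
  shows "cinner (Tt.gamma_fun (cnj l) \<phi>) h = cinner \<phi> (G1 (T.resolvent0 l h))"
proof -
  have l: "T.regular_point l" by (rule T.regular_point_if_resolvent[OF res])
  have lt: "Tt.regular_point (cnj l)" by (rule regular_point_cnj[OF res])
  let ?f = "T.resolvent0 l h" and ?g = "Tt.gamma_fun (cnj l) \<phi>"
  have "cinner (h + scaleC l ?f) ?g - cinner ?f (scaleC (cnj l) ?g) = cinner (G1 ?f) \<phi> - cinner (G0 ?f) (Gt1 ?g)"
    using green[OF T.resolvent0(1)[OF l] Tt.gamma_fun(1)[OF lt]] Tt.gamma_fun(2)[OF lt] by simp
  then have "cinner h ?g = cinner (G1 ?f) \<phi>"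
    using T.resolvent0(2)[OF l] by (simp add: cinner_add_left cinner_scaleC_left cinner_scaleC_right)
  then show ?thesis by (metis cinner_commute)
qed

lemma cinner_gamma:
  assumes res: "l \<in> resolvent_set (ker_restr T G0)"
  shows "cinner (T.gamma_fun l \<phi>) h = cinner \<phi> (Gt1 (Tt.resolvent0 (cnj l) h))"
proof -
  have l: "T.regular_point l" by (rule T.regular_point_if_resolvent[OF res])
  have lt: "Tt.regular_point (cnj l)" by (rule regular_point_cnj[OF res])
  let ?f = "T.gamma_fun l \<phi>" and ?g = "Tt.resolvent0 (cnj l) h"
  have "cinner (scaleC l ?f) ?g - cinner ?f (h + scaleC (cnj l) ?g) = cinner (G1 ?f) (Gt0 ?g) - cinner (G0 ?f) (Gt1 ?g)"
    by (rule green[OF T.gamma_fun(1)[OF l] Tt.resolvent0(1)[OF lt]])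
  then show ?thesis using T.gamma_fun(2)[OF l] Tt.resolvent0(2)[OF lt]
    by (simp add: cinner_add_right cinner_scaleC_left cinner_scaleC_right)
qed

lemma cinner_weyl:
  assumes res: "l \<in> resolvent_set (ker_restr T G0)"
  shows "cinner (G1 (T.gamma_fun l \<phi>)) \<psi> = cinner \<phi> (Gt1 (Tt.gamma_fun (cnj l) \<psi>))"
proof -
  have l: "T.regular_point l" by (rule T.regular_point_if_resolvent[OF res])
  have lt: "Tt.regular_point (cnj l)" by (rule regular_point_cnj[OF res])
  let ?f = "T.gamma_fun l \<phi>" and ?g = "Tt.gamma_fun (cnj l) \<psi>"
  have "cinner (scaleC l ?f) ?g - cinner ?f (scaleC (cnj l) ?g) = cinner (G1 ?f) (Gt0 ?g) - cinner (G0 ?f) (Gt1 ?g)"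
    by (rule green[OF T.gamma_fun(1)[OF l] Tt.gamma_fun(1)[OF lt]])
  then show ?thesis using T.gamma_fun(2)[OF l] Tt.gamma_fun(2)[OF lt]
    by (simp add: cinner_scaleC_left cinner_scaleC_right)
qed

lemma adjoint_gamma_tilde:
  assumes res: "l \<in> resolvent_set (ker_restr T G0)"
  shows "ladj (gamma_field Tt Gt0 (cnj l)) = {(h, G1 (T.resolvent0 l h)) | h. True}"
proof -
  have "(h, k) \<in> ladj (gamma_field Tt Gt0 (cnj l)) \<longleftrightarrow> k = G1 (T.resolvent0 l h)" for h k
  proof -
    have "(h, k) \<in> ladj (gamma_field Tt Gt0 (cnj l))
          \<longleftrightarrow> (\<forall>\<phi>. cinner \<phi> (G1 (T.resolvent0 l h)) = cinner \<phi> k)"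
      unfolding Tt.gamma_field_eq[OF regular_point_cnj[OF res]] ladj_def
      by (auto simp: cinner_gamma_tilde[OF res])
    also have "\<dots> \<longleftrightarrow> k = G1 (T.resolvent0 l h)"
      using cinner_ext_left[of "G1 (T.resolvent0 l h) - k"] by (auto simp: cinner_diff_right)
    finally show ?thesis .
  qed
  then show ?thesis by auto
qed

lemma weyl_eq:
  assumes l: "T.regular_point l"
  shows "weyl T G0 G1 l = {(\<phi>, G1 (T.gamma_fun l \<phi>)) | \<phi>. True}"
  unfolding weyl_def lcomp_def T.gamma_field_eq[OF l] using T.gamma_fun_ldom[OF l] by auto

lemma gamma_fun_bounded:
  assumes res: "l \<in> resolvent_set (ker_restr T G0)"
  shows "bounded_rel {(\<phi>, T.gamma_fun l \<phi>) | \<phi>. True}"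
proof -
  have l: "T.regular_point l" by (rule T.regular_point_if_resolvent[OF res])
  have "\<exists>K. \<forall>\<phi>. norm (T.gamma_fun l \<phi>) \<le> K * norm \<phi>"
    using T.gamma_fun_add[OF l] T.gamma_fun_scaleC[OF l] cinner_gamma[OF res]
    by (intro adjointable_bounded) blast+
  then show ?thesis unfolding bounded_rel_def by blast
qed

lemma G1_resolvent0_bounded:
  assumes res: "l \<in> resolvent_set (ker_restr T G0)"
  shows "bounded_rel {(h, G1 (T.resolvent0 l h)) | h. True}"
proof -
  have l: "T.regular_point l" by (rule T.regular_point_if_resolvent[OF res])
  have "\<exists>K. \<forall>h. norm (G1 (T.resolvent0 l h)) \<le> K * norm h"
  proof (rule adjointable_bounded)
    show "G1 (T.resolvent0 l (x + y)) = G1 (T.resolvent0 l x) + G1 (T.resolvent0 l y)" for x y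
      unfolding T.resolvent0_add[OF l] by (rule G1_add[OF T.resolvent0(1)[OF l] T.resolvent0(1)[OF l]])
    show "G1 (T.resolvent0 l (scaleC c x)) = scaleC c (G1 (T.resolvent0 l x))" for c x
      unfolding T.resolvent0_scaleC[OF l] by (rule G1_scaleC[OF T.resolvent0(1)[OF l]])
    show "\<exists>w. \<forall>x. cinner (G1 (T.resolvent0 l x)) v = cinner x w" for v
      using cinner_gamma_tilde[OF res] by (metis cinner_commute)
  qed
  then show ?thesis unfolding bounded_rel_def by blast
qed

lemma is_lop_G1_resolvent0:
  assumes l: "T.regular_point l"
  shows "is_lop {(h, G1 (T.resolvent0 l h)) | h. True}"
proof (rule is_lop_graph)
  show "G1 (T.resolvent0 l (x + y)) = G1 (T.resolvent0 l x) + G1 (T.resolvent0 l y)" for x y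
    unfolding T.resolvent0_add[OF l] by (rule G1_add[OF T.resolvent0(1)[OF l] T.resolvent0(1)[OF l]])
  show "G1 (T.resolvent0 l (scaleC c x)) = scaleC c (G1 (T.resolvent0 l x))" for c x
    unfolding T.resolvent0_scaleC[OF l] by (rule G1_scaleC[OF T.resolvent0(1)[OF l]])
qed

lemma weyl_closed_lop:
  assumes res: "l \<in> resolvent_set (ker_restr T G0)"
  shows "closed_lop (weyl T G0 G1 l)"
proof -
  have l: "T.regular_point l" by (rule T.regular_point_if_resolvent[OF res])
  have "closed {(\<phi>, G1 (T.gamma_fun l \<phi>)) | \<phi>. True}"
    using cinner_weyl[OF res] by (intro closed_graphI adjointable_graph_closed) blast+
  moreover have "is_lop {(\<phi>, G1 (T.gamma_fun l \<phi>)) | \<phi>. True}"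
  proof (rule is_lop_graph)
    show "G1 (T.gamma_fun l (x + y)) = G1 (T.gamma_fun l x) + G1 (T.gamma_fun l y)" for x y
      unfolding T.gamma_fun_add[OF l] by (rule G1_add[OF T.gamma_fun(1)[OF l] T.gamma_fun(1)[OF l]])
    show "G1 (T.gamma_fun l (scaleC c x)) = scaleC c (G1 (T.gamma_fun l x))" for c x
      unfolding T.gamma_fun_scaleC[OF l] by (rule G1_scaleC[OF T.gamma_fun(1)[OF l]])
  qed
  ultimately show ?thesis unfolding closed_lop_def weyl_eq[OF l] by blast
qed

lemma A_ext_iff: "(f, y) \<in> A_ext T G0 G1 B \<longleftrightarrow> (f, y) \<in> T \<and> (G1 f, G0 f) \<in> B"
  by (simp add: A_ext_def)

lemma is_lop_A_ext:
  assumes B: "is_lop B"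
  shows "is_lop (A_ext T G0 G1 B)"
proof (rule is_lopI)
  show "(0, 0) \<in> A_ext T G0 G1 B"
    using lop_zero[OF T.T_lop] lop_zero[OF B] by (simp add: A_ext_iff G1_zero T.G0_zero)
  show "(x + x', y + y') \<in> A_ext T G0 G1 B"
    if "(x, y) \<in> A_ext T G0 G1 B" "(x', y') \<in> A_ext T G0 G1 B" for x y x' y'
  proof -
    have xy: "(x, y) \<in> T" "(x', y') \<in> T" and bd: "(G1 x, G0 x) \<in> B" "(G1 x', G0 x') \<in> B"
      using that by (auto simp: A_ext_iff)
    have "(G1 x + G1 x', G0 x + G0 x') \<in> B" by (rule lop_add[OF B bd])
    then show ?thesis
      using lop_add[OF T.T_lop xy] G1_add[OF xy] T.G0_add[OF xy] by (simp add: A_ext_iff)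
  qed
  show "(scaleC c x, scaleC c y) \<in> A_ext T G0 G1 B" if "(x, y) \<in> A_ext T G0 G1 B" for c x y
  proof -
    have xy: "(x, y) \<in> T" and bd: "(G1 x, G0 x) \<in> B" using that by (auto simp: A_ext_iff)
    have "(scaleC c (G1 x), scaleC c (G0 x)) \<in> B" by (rule lop_scaleC[OF B bd])
    then show ?thesis
      using lop_scaleC[OF T.T_lop xy] G1_scaleC[OF xy] T.G0_scaleC[OF xy] by (simp add: A_ext_iff)
  qed
  show "y = 0" if "(0, y) \<in> A_ext T G0 G1 B" for y
    using that lop_zero_unique[OF T.T_lop] by (simp add: A_ext_iff)
qed

end

section \<open>The resolvent formula\<close>

context boundary_triple
begin

text \<open>The solution \<open>f\<close> of \<open>(A\<^sub>B\<^sub>1\<^sub>B\<^sub>2 - l) f = h\<close> is \<open>(A0 - l)\<inverse> h + \<gamma>(l) \<phi>\<close>, where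
  \<open>\<xi> \<mapsto> \<phi>\<close> under \<open>B1\<close> and \<open>B2 \<Gamma>1 (A0 - l)\<inverse> h = \<xi> - B2 M(l) \<phi>\<close>.\<close>
lemma perturbed_resolvent_intro:
  assumes l: "T.regular_point l" and B2: "is_lop B2"
    and "(G1 (T.resolvent0 l h), \<xi> - y) \<in> B2" "(\<xi>, \<phi>) \<in> B1" "(G1 (T.gamma_fun l \<phi>), y) \<in> B2"
  shows "(h, T.resolvent0 l h + T.gamma_fun l \<phi>) \<in> converse (lshift (A_ext T G0 G1 (lcomp B1 B2)) l)"
proof -
  let ?f0 = "T.resolvent0 l h" and ?z = "T.gamma_fun l \<phi>"
  have f0: "(?f0, h + scaleC l ?f0) \<in> T" "G0 ?f0 = 0" by (rule T.resolvent0[OF l])+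
  have z: "(?z, scaleC l ?z) \<in> T" "G0 ?z = \<phi>" by (rule T.gamma_fun[OF l])+
  have "(?f0 + ?z, h + scaleC l (?f0 + ?z)) \<in> T"
    using lop_add[OF T.T_lop f0(1) z(1)] by (simp add: scaleC_add_right add.assoc)
  moreover have "(G1 (?f0 + ?z), \<xi>) \<in> B2"
    using lop_add[OF B2 assms(3,5)] G1_add[OF f0(1) z(1)] by simp
  then have "(G1 (?f0 + ?z), G0 (?f0 + ?z)) \<in> lcomp B1 B2"
    using assms(4) T.G0_add[OF f0(1) z(1)] f0(2) z(2) unfolding lcomp_def by auto
  ultimately have "(?f0 + ?z, h + scaleC l (?f0 + ?z)) \<in> A_ext T G0 G1 (lcomp B1 B2)"
    by (simp add: A_ext_iff)
  then have "(?f0 + ?z, h) \<in> lshift (A_ext T G0 G1 (lcomp B1 B2)) l"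
    unfolding lshift_iff by force
  then show ?thesis by simp
qed

lemma perturbed_resolvent_elim:
  assumes l: "T.regular_point l" and B2: "is_lop B2"
    and ker: "G1 ` {f \<in> ldom T. G0 f = 0} \<subseteq> ldom (lcomp B1 B2)"
    and fh: "(f, h) \<in> lshift (A_ext T G0 G1 (lcomp B1 B2)) l"
  obtains \<xi> y where "(G1 (T.resolvent0 l h), \<xi> - y) \<in> B2" "(\<xi>, G0 f) \<in> B1"
    "(G1 (T.gamma_fun l (G0 f)), y) \<in> B2" "f = T.resolvent0 l h + T.gamma_fun l (G0 f)"
proof -
  let ?f0 = "T.resolvent0 l h"
  obtain Tf where fT: "(f, Tf) \<in> T" and hT: "h = Tf - scaleC l f" and fB: "(G1 f, G0 f) \<in> lcomp B1 B2"
    using fh unfolding lshift_iff A_ext_iff by blast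
  obtain \<xi> where \<xi>: "(G1 f, \<xi>) \<in> B2" "(\<xi>, G0 f) \<in> B1" using fB unfolding lcomp_def by blast
  have "(f - ?f0, scaleC l (f - ?f0)) \<in> T" "G0 (f - ?f0) = G0 f"
    unfolding hT by (rule T.sub_resolvent0_eigen[OF l fT])+
  then have gamma: "T.gamma_fun l (G0 f) = f - ?f0" using T.gamma_fun_eq[OF l] by metis
  have "G1 ?f0 \<in> ldom (lcomp B1 B2)"
    using ker T.resolvent0_ldom[OF l] T.resolvent0(2)[OF l] by blast
  then obtain \<psi> where \<psi>: "(G1 ?f0, \<psi>) \<in> B2" unfolding ldom_iff lcomp_def by blast
  have "(G1 f - G1 ?f0, \<xi> - \<psi>) \<in> B2" by (rule lop_diff[OF B2 \<xi>(1) \<psi>])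
  then have "(G1 (T.gamma_fun l (G0 f)), \<xi> - \<psi>) \<in> B2"
    unfolding gamma G1_diff[OF fT T.resolvent0(1)[OF l]] .
  moreover have "(G1 ?f0, \<xi> - (\<xi> - \<psi>)) \<in> B2" using \<psi> by simp
  moreover have "f = ?f0 + T.gamma_fun l (G0 f)" using gamma by simp
  ultimately show thesis using that \<xi>(2) by blast
qed

lemma perturbation_term_iff:
  assumes res: "l \<in> resolvent_set (ker_restr T G0)" and B1: "is_lop B1"
  shows "(h, z) \<in> lcomp (gamma_field T G0 l)
                  (lcomp B1
                    (lcomp (converse (lid_minus (lcomp B2 (lcomp (weyl T G0 G1 l) B1))))
                      (lcomp B2 (ladj (gamma_field Tt Gt0 (cnj l))))))
     \<longleftrightarrow> (\<exists>\<xi> \<phi> y. (G1 (T.resolvent0 l h), \<xi> - y) \<in> B2 \<and> (\<xi>, \<phi>) \<in> B1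
            \<and> (G1 (T.gamma_fun l \<phi>), y) \<in> B2 \<and> z = T.gamma_fun l \<phi>)"
proof -
  have l: "T.regular_point l" by (rule T.regular_point_if_resolvent[OF res])
  have inverse: "(\<psi>, \<xi>) \<in> converse (lid_minus (lcomp B2 (lcomp (weyl T G0 G1 l) B1)))
        \<longleftrightarrow> (\<exists>\<phi> y. (\<xi>, \<phi>) \<in> B1 \<and> (G1 (T.gamma_fun l \<phi>), y) \<in> B2 \<and> \<psi> = \<xi> - y)" for \<psi> \<xi>
    unfolding lid_minus_converse_iff lcomp_iff weyl_eq[OF l] by blast
  have "(h, z) \<in> lcomp (gamma_field T G0 l)
                  (lcomp B1
                    (lcomp (converse (lid_minus (lcomp B2 (lcomp (weyl T G0 G1 l) B1))))
                      (lcomp B2 (ladj (gamma_field Tt Gt0 (cnj l))))))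
     \<longleftrightarrow> (\<exists>\<psi> \<xi> \<phi>. (G1 (T.resolvent0 l h), \<psi>) \<in> B2
        \<and> (\<psi>, \<xi>) \<in> converse (lid_minus (lcomp B2 (lcomp (weyl T G0 G1 l) B1)))
        \<and> (\<xi>, \<phi>) \<in> B1 \<and> z = T.gamma_fun l \<phi>)"
    unfolding lcomp_iff T.gamma_field_eq[OF l] adjoint_gamma_tilde[OF res] by blast
  also have "\<dots> \<longleftrightarrow> (\<exists>\<xi> \<phi> y. (G1 (T.resolvent0 l h), \<xi> - y) \<in> B2 \<and> (\<xi>, \<phi>) \<in> B1
            \<and> (G1 (T.gamma_fun l \<phi>), y) \<in> B2 \<and> z = T.gamma_fun l \<phi>)"
    unfolding inverse using lop_single_valued[OF B1] by blast
  finally show ?thesis .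
qed

theorem perturbed_resolvent_formula:
  assumes res: "l \<in> resolvent_set (ker_restr T G0)" and B1: "is_lop B1" and B2: "is_lop B2"
    and ker: "G1 ` {f \<in> ldom T. G0 f = 0} \<subseteq> ldom (lcomp B1 B2)"
  shows "converse (lshift (A_ext T G0 G1 (lcomp B1 B2)) l)
            = lsum (converse (lshift (ker_restr T G0) l))
                (lcomp (gamma_field T G0 l)
                  (lcomp B1
                    (lcomp (converse (lid_minus (lcomp B2 (lcomp (weyl T G0 G1 l) B1))))
                      (lcomp B2 (ladj (gamma_field Tt Gt0 (cnj l)))))))"
proof -
  have l: "T.regular_point l" by (rule T.regular_point_if_resolvent[OF res])
  have "(h, f) \<in> converse (lshift (A_ext T G0 G1 (lcomp B1 B2)) l)
        \<longleftrightarrow> (\<exists>\<xi> \<phi> y. (G1 (T.resolvent0 l h), \<xi> - y) \<in> B2 \<and> (\<xi>, \<phi>) \<in> B1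
            \<and> (G1 (T.gamma_fun l \<phi>), y) \<in> B2 \<and> f = T.resolvent0 l h + T.gamma_fun l \<phi>)" for h f
  proof
    assume "(h, f) \<in> converse (lshift (A_ext T G0 G1 (lcomp B1 B2)) l)"
    then have "(f, h) \<in> lshift (A_ext T G0 G1 (lcomp B1 B2)) l" by simp
    then obtain \<xi> y where "(G1 (T.resolvent0 l h), \<xi> - y) \<in> B2" "(\<xi>, G0 f) \<in> B1"
      "(G1 (T.gamma_fun l (G0 f)), y) \<in> B2" "f = T.resolvent0 l h + T.gamma_fun l (G0 f)"
      by (rule perturbed_resolvent_elim[OF l B2 ker])
    then show "\<exists>\<xi> \<phi> y. (G1 (T.resolvent0 l h), \<xi> - y) \<in> B2 \<and> (\<xi>, \<phi>) \<in> B1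
            \<and> (G1 (T.gamma_fun l \<phi>), y) \<in> B2 \<and> f = T.resolvent0 l h + T.gamma_fun l \<phi>" by blast
  qed (use perturbed_resolvent_intro[OF l B2] in blast)
  moreover have "(h, f) \<in> lsum (converse (lshift (ker_restr T G0) l))
                (lcomp (gamma_field T G0 l)
                  (lcomp B1
                    (lcomp (converse (lid_minus (lcomp B2 (lcomp (weyl T G0 G1 l) B1))))
                      (lcomp B2 (ladj (gamma_field Tt Gt0 (cnj l)))))))
        \<longleftrightarrow> (\<exists>\<xi> \<phi> y. (G1 (T.resolvent0 l h), \<xi> - y) \<in> B2 \<and> (\<xi>, \<phi>) \<in> B1
            \<and> (G1 (T.gamma_fun l \<phi>), y) \<in> B2 \<and> f = T.resolvent0 l h + T.gamma_fun l \<phi>)" for h f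
    unfolding lsum_iff T.converse_lshift_A0[OF l] perturbation_term_iff[OF res B1] by blast
  ultimately show ?thesis by (intro equalityI subrelI) simp_all
qed

end

context boundary_triple
begin

context
  fixes B1 :: "('k::chilbert, 'g) lop" and B2 :: "('g, 'k) lop" and l0 :: complex
  assumes B1: "closable B1" and B2: "closable B2"
    and l0: "l0 \<in> resolvent_set (ker_restr T G0)"
    and weyl_B1: "closable (lcomp (weyl T G0 G1 l0) B1)"
    and one_resolvent: "1 \<in> resolvent_set (lcomp B2 (closure (lcomp (weyl T G0 G1 l0) B1)))"
    and ran_dom: "lran (lcomp B2 (closure (lcomp (weyl T G0 G1 l0) B1))) \<subseteq> ldom B1"
    and ker_dom: "G1 ` {f \<in> ldom T. G0 f = 0} \<subseteq> ldom (lcomp B1 B2)"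
begin

abbreviation C0 :: "('k, 'k) lop" where
  "C0 \<equiv> lcomp B2 (closure (lcomp (weyl T G0 G1 l0) B1))"

text \<open>The map \<open>h \<mapsto> B1 (I - C0)\<inverse> B2 \<Gamma>1 (A0 - l0)\<inverse> h\<close>, whose image under \<open>\<gamma>(l0)\<close> is
  the perturbation part of the resolvent of \<open>A\<^sub>B\<^sub>1\<^sub>B\<^sub>2\<close> at \<open>l0\<close>.\<close>
abbreviation coefficient_map :: "('h, 'g) lop" where
  "coefficient_map \<equiv> (({(h, G1 (T.resolvent0 l0 h)) | h. True} O B2) O converse (lid_minus C0)) O B1"

lemma regular_l0: "T.regular_point l0"
  by (rule T.regular_point_if_resolvent[OF l0])

lemma is_lop_C0: "is_lop C0"
  using B2 weyl_B1 by (intro is_lop_lcomp) (simp_all add: closable_def)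

lemma closure_weyl_B1_eq:
  assumes "(\<xi>, \<phi>) \<in> B1" "(\<xi>, m) \<in> closure (lcomp (weyl T G0 G1 l0) B1)"
  shows "m = G1 (T.gamma_fun l0 \<phi>)"
proof -
  have "(\<xi>, G1 (T.gamma_fun l0 \<phi>)) \<in> lcomp (weyl T G0 G1 l0) B1"
    using assms(1) unfolding lcomp_iff weyl_eq[OF regular_l0] by blast
  then have "(\<xi>, G1 (T.gamma_fun l0 \<phi>)) \<in> closure (lcomp (weyl T G0 G1 l0) B1)"
    using closure_subset by blast
  with weyl_B1 assms(2) show ?thesis
    unfolding closable_def using lop_single_valued by blast
qed

lemma coefficient_map_solves:
  assumes "(h, \<phi>) \<in> coefficient_map"
  shows "(T.resolvent0 l0 h + T.gamma_fun l0 \<phi>, h) \<in> lshift (A_ext T G0 G1 (lcomp B1 B2)) l0"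
proof -
  obtain \<psi> \<xi> where \<psi>: "(G1 (T.resolvent0 l0 h), \<psi>) \<in> B2"
    and \<xi>: "(\<psi>, \<xi>) \<in> converse (lid_minus C0)" and \<phi>: "(\<xi>, \<phi>) \<in> B1"
    using assms by blast
  obtain y m where "\<psi> = \<xi> - y" "(\<xi>, m) \<in> closure (lcomp (weyl T G0 G1 l0) B1)" "(m, y) \<in> B2"
    using \<xi> unfolding lid_minus_converse_iff lcomp_iff by blast
  moreover from this have "m = G1 (T.gamma_fun l0 \<phi>)" using closure_weyl_B1_eq[OF \<phi>] by blast
  ultimately show ?thesis
    using perturbed_resolvent_intro[OF regular_l0 _ _ \<phi>, of B2 h y] B2 \<psi>
    by (simp add: closable_def)
qed

lemma coefficient_map_total: "ldom coefficient_map = UNIV"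
proof -
  have "\<exists>\<phi>. (h, \<phi>) \<in> coefficient_map" for h
  proof -
    have "G1 (T.resolvent0 l0 h) \<in> ldom (lcomp B1 B2)"
      using ker_dom T.resolvent0_ldom[OF regular_l0] T.resolvent0(2)[OF regular_l0] by blast
    then obtain \<psi> where \<psi>: "(G1 (T.resolvent0 l0 h), \<psi>) \<in> B2" "\<psi> \<in> ldom B1"
      unfolding ldom_iff lcomp_iff by blast
    obtain \<xi> where \<xi>: "(\<psi>, \<xi>) \<in> converse (lid_minus C0)"
      using ldom_inverse_lid_minus[OF one_resolvent] unfolding ldom_eq_UNIV_iff by blast
    then obtain y where "(\<xi>, y) \<in> C0" "\<psi> = \<xi> - y" unfolding lid_minus_converse_iff by blast
    \<comment> \<open>\<open>\<xi> = \<psi> + y\<close>, where \<open>\<psi> \<in> dom B1\<close> by (iii) and \<open>y \<in> ran C0 \<subseteq> dom B1\<close> by (ii)\<close>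
    moreover from this have "y \<in> lran C0" unfolding lran_iff by blast
    then have "y \<in> ldom B1" using ran_dom by blast
    moreover have "is_lop B1" using B1 by (simp add: closable_def)
    ultimately have "\<psi> + y \<in> ldom B1" "\<psi> = \<xi> - y" using ldom_add \<psi>(2) by blast+
    then have "\<xi> \<in> ldom B1" by simp
    then show ?thesis using \<psi>(1) \<xi> unfolding ldom_iff by blast
  qed
  then show ?thesis unfolding ldom_eq_UNIV_iff by blast
qed

lemma coefficient_map_bounded: "bounded_rel coefficient_map"
proof -
  have B2_lop: "is_lop B2" using B2 by (simp add: closable_def)
  let ?E1 = "{(h, G1 (T.resolvent0 l0 h)) | h. True}"
  have E1: "is_lop ?E1" "bounded_rel ?E1"
    by (rule is_lop_G1_resolvent0[OF regular_l0], rule G1_resolvent0_bounded[OF l0])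
  have "ldom (?E1 O B2) = UNIV" using coefficient_map_total unfolding ldom_eq_UNIV_iff by blast
  then have E2: "bounded_rel (?E1 O B2)" by (rule bounded_rel_relcomp_closable[OF E1 B2])
  have E3: "is_lop ((?E1 O B2) O converse (lid_minus C0))"
    using is_lop_inverse_lid_minus[OF is_lop_C0 one_resolvent]
    by (intro is_lop_relcomp E1(1) B2_lop)
  have "bounded_rel ((?E1 O B2) O converse (lid_minus C0))"
    using bounded_rel_inverse_lid_minus[OF one_resolvent] by (rule bounded_rel_relcomp[OF E2])
  with E3 show ?thesis by (rule bounded_rel_relcomp_closable[OF _ _ B1 coefficient_map_total])
qed

lemma perturbed_injective:
  assumes "(x, 0) \<in> lshift (A_ext T G0 G1 (lcomp B1 B2)) l0"
  shows "x = 0"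
proof -
  obtain y where "(x, y) \<in> A_ext T G0 G1 (lcomp B1 B2)" "0 = y - scaleC l0 x"
    using assms unfolding lshift_iff by blast
  moreover from this have "y = scaleC l0 x" by (metis right_minus_eq)
  ultimately have xT: "(x, scaleC l0 x) \<in> T" and "(G1 x, G0 x) \<in> lcomp B1 B2"
    unfolding A_ext_iff by simp_all
  then obtain \<xi> where \<xi>: "(G1 x, \<xi>) \<in> B2" "(\<xi>, G0 x) \<in> B1" unfolding lcomp_iff by blast
  have "G1 x = G1 (T.gamma_fun l0 (G0 x))" using T.gamma_fun_eq[OF regular_l0 xT] by simp
  then have "(G0 x, G1 x) \<in> weyl T G0 G1 l0" unfolding weyl_eq[OF regular_l0] by blast
  then have "(\<xi>, G1 x) \<in> lcomp (weyl T G0 G1 l0) B1" using \<xi>(2) unfolding lcomp_iff by blast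
  then have "(\<xi>, G1 x) \<in> closure (lcomp (weyl T G0 G1 l0) B1)" using closure_subset by blast
  then have "(\<xi>, \<xi>) \<in> C0" using \<xi>(1) unfolding lcomp_iff by blast
  \<comment> \<open>a fixed point of \<open>C0\<close> vanishes since \<open>1 \<in> \<rho>(C0)\<close>, hence \<open>\<Gamma>0 x = B1 \<xi> = 0\<close>\<close>
  then have "(\<xi>, 0) \<in> lshift C0 1" unfolding lshift_one_iff by simp
  then have "\<xi> = 0" using one_resolvent by (simp add: resolvent_set_def)
  moreover have "is_lop B1" using B1 by (simp add: closable_def)
  ultimately have "G0 x = 0" using \<xi>(2) lop_zero_unique by blast
  then show "x = 0" by (rule T.regular_point_eigen_zero[OF regular_l0 xT])
qed

lemma l0_in_perturbed_resolvent_set: "l0 \<in> resolvent_set (A_ext T G0 G1 (lcomp B1 B2))"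
proof -
  let ?A = "A_ext T G0 G1 (lcomp B1 B2)"
  have A: "is_lop ?A" using B1 B2 by (intro is_lop_A_ext is_lop_lcomp) (simp_all add: closable_def)
  have solution: "\<exists>\<phi>. (h, \<phi>) \<in> coefficient_map \<and> x = T.resolvent0 l0 h + T.gamma_fun l0 \<phi>"
    if xh: "(x, h) \<in> lshift ?A l0" for x h
  proof -
    obtain \<phi> where \<phi>: "(h, \<phi>) \<in> coefficient_map"
      using coefficient_map_total unfolding ldom_eq_UNIV_iff by blast
    have "(x - (T.resolvent0 l0 h + T.gamma_fun l0 \<phi>), 0) \<in> lshift ?A l0"
      using lshift_diff[OF A xh coefficient_map_solves[OF \<phi>]] by simp
    then have "x - (T.resolvent0 l0 h + T.gamma_fun l0 \<phi>) = 0" by (rule perturbed_injective)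
    then show ?thesis using \<phi> by (intro exI[of _ \<phi>]) simp
  qed
  obtain K0 where K0: "\<And>h. norm (T.resolvent0 l0 h) \<le> K0 * norm h"
    using T.resolvent0_bounded[OF l0] by blast
  obtain K1 where "0 \<le> K1" and K1: "\<And>h \<phi>. (h, \<phi>) \<in> coefficient_map \<Longrightarrow> norm \<phi> \<le> K1 * norm h"
    by (rule bounded_relE[OF coefficient_map_bounded], rule that)
  obtain K2 where "0 \<le> K2"
    and K2: "\<And>\<phi> f. (\<phi>, f) \<in> {(\<phi>, T.gamma_fun l0 \<phi>) | \<phi>. True} \<Longrightarrow> norm f \<le> K2 * norm \<phi>"
    by (rule bounded_relE[OF gamma_fun_bounded[OF l0]], rule that)
  have bound: "norm x \<le> (K0 + K2 * K1) * norm h" if xh: "(x, h) \<in> lshift ?A l0" for x h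
  proof -
    obtain \<phi> where \<phi>: "(h, \<phi>) \<in> coefficient_map" "x = T.resolvent0 l0 h + T.gamma_fun l0 \<phi>"
      using solution[OF xh] by blast
    have "norm x \<le> K0 * norm h + K2 * norm \<phi>"
      unfolding \<phi>(2) by (rule order_trans[OF norm_triangle_ineq add_mono[OF K0 K2]]) blast
    also have "\<dots> \<le> K0 * norm h + K2 * (K1 * norm h)"
      using mult_left_mono[OF K1[OF \<phi>(1)] \<open>0 \<le> K2\<close>] by simp
    finally show ?thesis by (simp add: algebra_simps)
  qed
  have "lran (lshift ?A l0) = UNIV"
    using coefficient_map_solves coefficient_map_total unfolding lran_eq_UNIV_iff ldom_eq_UNIV_iff by blast
  moreover have "\<forall>x. (x, 0) \<in> lshift ?A l0 \<longrightarrow> x = 0" using perturbed_injective by blast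
  moreover have "\<exists>K. \<forall>x h. (x, h) \<in> lshift ?A l0 \<longrightarrow> norm x \<le> K * norm h" using bound by blast
  ultimately show ?thesis by (simp add: resolvent_set_def)
qed

end

end

section \<open>Perturbations of the form \<open>B1 B2\<close> and \<open>B\<close>\<close>

context boundary_triple
begin

theorem perturbed_operator_resolvent:
  assumes "closable B1" "closable B2" "l0 \<in> resolvent_set (ker_restr T G0)"
    "closable (lcomp (weyl T G0 G1 l0) B1)"
    "1 \<in> resolvent_set (lcomp B2 (closure (lcomp (weyl T G0 G1 l0) B1)))"
    "lran (lcomp B2 (closure (lcomp (weyl T G0 G1 l0) B1))) \<subseteq> ldom B1"
    "G1 ` {f \<in> ldom T. G0 f = 0} \<subseteq> ldom (lcomp B1 B2)"
  shows "closed_lop (A_ext T G0 G1 (lcomp B1 B2))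
       \<and> resolvent_set (A_ext T G0 G1 (lcomp B1 B2)) \<noteq> {}
       \<and> (\<forall>l \<in> resolvent_set (ker_restr T G0) \<inter> resolvent_set (A_ext T G0 G1 (lcomp B1 B2)).
            converse (lshift (A_ext T G0 G1 (lcomp B1 B2)) l)
            = lsum (converse (lshift (ker_restr T G0) l))
                (lcomp (gamma_field T G0 l)
                  (lcomp B1
                    (lcomp (converse (lid_minus (lcomp B2 (lcomp (weyl T G0 G1 l) B1))))
                      (lcomp B2 (ladj (gamma_field Tt Gt0 (cnj l))))))))"
proof -
  have lops: "is_lop B1" "is_lop B2" using assms(1,2) by (simp_all add: closable_def)
  have l0: "l0 \<in> resolvent_set (A_ext T G0 G1 (lcomp B1 B2))"
    by (rule l0_in_perturbed_resolvent_set[OF assms])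
  moreover have "is_lop (A_ext T G0 G1 (lcomp B1 B2))" by (intro is_lop_A_ext is_lop_lcomp lops)
  ultimately have "closed_lop (A_ext T G0 G1 (lcomp B1 B2))"
    unfolding closed_lop_def using resolvent_set_imp_closed by blast
  then show ?thesis using l0 perturbed_resolvent_formula[OF _ lops assms(7)] by blast
qed

text \<open>For \<open>B1 = I\<close>, \<open>B2 = B\<close> the operator \<open>M(l0) B1 = M(l0)\<close> is already closed and condition (ii)
  is void.\<close>
corollary single_perturbation_resolvent:
  assumes B: "closable B" and l0: "l0 \<in> resolvent_set (ker_restr T G0)"
    and one: "1 \<in> resolvent_set (lcomp B (weyl T G0 G1 l0))"
    and ker: "G1 ` {f \<in> ldom T. G0 f = 0} \<subseteq> ldom B"
  shows "closed_lop (A_ext T G0 G1 B)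
       \<and> resolvent_set (A_ext T G0 G1 B) \<noteq> {}
       \<and> (\<forall>l \<in> resolvent_set (ker_restr T G0) \<inter> resolvent_set (A_ext T G0 G1 B).
            converse (lshift (A_ext T G0 G1 B) l)
            = lsum (converse (lshift (ker_restr T G0) l))
                (lcomp (gamma_field T G0 l)
                  (lcomp (converse (lid_minus (lcomp B (weyl T G0 G1 l))))
                    (lcomp B (ladj (gamma_field Tt Gt0 (cnj l)))))))"
proof -
  have weyl: "closed (weyl T G0 G1 l0)" "is_lop (weyl T G0 G1 l0)"
    using weyl_closed_lop[OF l0] by (simp_all add: closed_lop_def)
  have "closable Id" by (rule closable_if_closed[OF is_lop_Id closed_Id])
  moreover have "closable (lcomp (weyl T G0 G1 l0) Id)" using weyl by (simp add: closable_if_closed)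
  moreover have "ldom (Id :: ('g \<times> 'g) set) = UNIV" by (simp add: ldom_eq_UNIV_iff)
  ultimately show ?thesis
    using perturbed_operator_resolvent[of Id B l0] B l0 one ker closure_closed[OF weyl(1)] by simp
qed

end

theorem corollary4p9:
  fixes S St T Tt :: "('h::chilbert, 'h) lop"
    and G0 G1 Gt0 Gt1 :: "'h \<Rightarrow> 'g::chilbert"
    and B1 B2 B :: "('g, 'g) lop"
    and l0 l0' :: complex
  assumes sep: "\<exists>D :: 'h set. countable D \<and> closure D = UNIV"
    and S_op: "closed_lop S" "densely_defined S"
    and St_op: "closed_lop St" "densely_defined St"
    and adj_pair: "\<forall>f Sf g Stg. (f, Sf) \<in> S \<longrightarrow> (g, Stg) \<in> St \<longrightarrow> cinner Sf g = cinner f Stg"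
    and T_core: "is_lop T" "T \<subseteq> ladj S" "closure T = ladj S"
    and Tt_core: "is_lop Tt" "Tt \<subseteq> ladj St" "closure Tt = ladj St"
    and lin: "clinear_on (ldom T) G0" "clinear_on (ldom T) G1"
             "clinear_on (ldom Tt) Gt0" "clinear_on (ldom Tt) Gt1"
    and Green: "\<forall>f Tf g Ttg. (f, Tf) \<in> T \<longrightarrow> (g, Ttg) \<in> Tt \<longrightarrow>
                  cinner Tf g - cinner f Ttg = cinner (G1 f) (Gt0 g) - cinner (G0 f) (Gt1 g)"
    and M_cond: "ladj (ker_restr T G0) = ker_restr Tt Gt0" "ladj (ker_restr Tt Gt0) = ker_restr T G0"
    and ran_G0: "G0 ` ldom T = UNIV"
    and ran_Gt0: "Gt0 ` ldom Tt = UNIV"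
    and rho_ne: "resolvent_set (ker_restr T G0) \<noteq> {}"
  shows
   "(closable B1 \<and> closable B2 \<and> l0 \<in> resolvent_set (ker_restr T G0)
     \<and> closable (lcomp (weyl T G0 G1 l0) B1)
     \<and> 1 \<in> resolvent_set (lcomp B2 (closure (lcomp (weyl T G0 G1 l0) B1)))
     \<and> lran (lcomp B2 (closure (lcomp (weyl T G0 G1 l0) B1))) \<subseteq> ldom B1
     \<and> G1 ` {f \<in> ldom T. G0 f = 0} \<subseteq> ldom (lcomp B1 B2)
     \<longrightarrow> closed_lop (A_ext T G0 G1 (lcomp B1 B2))
       \<and> resolvent_set (A_ext T G0 G1 (lcomp B1 B2)) \<noteq> {}
       \<and> (\<forall>l \<in> resolvent_set (ker_restr T G0) \<inter> resolvent_set (A_ext T G0 G1 (lcomp B1 B2)).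
            converse (lshift (A_ext T G0 G1 (lcomp B1 B2)) l)
            = lsum (converse (lshift (ker_restr T G0) l))
                (lcomp (gamma_field T G0 l)
                  (lcomp B1
                    (lcomp (converse (lid_minus (lcomp B2 (lcomp (weyl T G0 G1 l) B1))))
                      (lcomp B2 (ladj (gamma_field Tt Gt0 (cnj l))))))))) \<and>
    (closable B \<and> l0' \<in> resolvent_set (ker_restr T G0)
     \<and> 1 \<in> resolvent_set (lcomp B (weyl T G0 G1 l0'))
     \<and> G1 ` {f \<in> ldom T. G0 f = 0} \<subseteq> ldom B
     \<longrightarrow> closed_lop (A_ext T G0 G1 B)
       \<and> resolvent_set (A_ext T G0 G1 B) \<noteq> {}
       \<and> (\<forall>l \<in> resolvent_set (ker_restr T G0) \<inter> resolvent_set (A_ext T G0 G1 B).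
            converse (lshift (A_ext T G0 G1 B) l)
            = lsum (converse (lshift (ker_restr T G0) l))
                (lcomp (gamma_field T G0 l)
                  (lcomp (converse (lid_minus (lcomp B (weyl T G0 G1 l))))
                    (lcomp B (ladj (gamma_field Tt Gt0 (cnj l))))))))"
proof -
  interpret boundary_triple T G0 Tt Gt0 G1 Gt1
    by unfold_locales (use T_core(1) Tt_core(1) lin Green M_cond(1) ran_G0 ran_Gt0 in auto)
  show ?thesis
    by (rule conjI; rule impI; elim conjE)
      (rule perturbed_operator_resolvent single_perturbation_resolvent; assumption)+
qed

end
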